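(* Let $\alpha,\beta\ge-1/2$, $1<p<\infty$, and let $f$ be a sequence on $\mathbb{N}$ with only finitely many nonzero terms. Then \[ \lim_{r\to1^-}\|\mathcal{T}_rf-f\|_{\ell^p(\mathbb{N})}=0. \]
   Context: $\mathbb{N}=\{0,1,2,\dots\}$. $d\mu_{\alpha,\beta}(x)=(1-x)^\alpha(1+x)^\beta\,dx$ on $[-1,1]$; $p_n^{(\alpha,\beta)}$ are the orthonormal Jacobi polynomials (classical Jacobi polynomials $P_n^{(\alpha,\beta)}$ normalized in $L^2([-1,1],d\mu_{\alpha,\beta})$). For $0<r<1$ and a sequence $f$, $\mathcal{T}_rf=\mathcal{F}^{-1}_{\alpha,\beta}(\chi_{[-r,r]}\mathcal{F}_{\alpha,\beta}f)$, where $\mathcal{F}_{\alpha,\beta}f(x)=\sum_{k\ge0}f(k)p_k^{(\alpha,\beta)}(x)$ and $\mathcal{F}^{-1}_{\alpha,\beta}F(n)=\int_{-1}^1F\,p_n^{(\alpha,\beta)}\,d\mu_{\alpha,\beta}$; equivalently $\mathcal{T}_rf(n)=\sum_{m\ge0}f(m)\int_{-r}^r p_m^{(\alpha,\beta)}p_n^{(\alpha,\beta)}\,d\mu_{\alpha,\beta}$. *)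

theory Defs
  imports "HOL-Analysis.Analysis"
begin

definition jacobi_weight :: "real \<Rightarrow> real \<Rightarrow> real \<Rightarrow> real" where
  "jacobi_weight a b x = (1 - x) powr a * (1 + x) powr b"

definition jacobi_P :: "real \<Rightarrow> real \<Rightarrow> nat \<Rightarrow> real \<Rightarrow> real" where
  "jacobi_P a b n x =
     (\<Sum>s\<le>n. ((real n + a) gchoose (n - s)) * ((real n + b) gchoose s)
               * ((x - 1) / 2) ^ s * ((x + 1) / 2) ^ (n - s))"

definition jacobi_p :: "real \<Rightarrow> real \<Rightarrow> nat \<Rightarrow> real \<Rightarrow> real" where
  "jacobi_p a b n x =
     jacobi_P a b n x /
       sqrt (LINT y:{-1..1}|lborel. (jacobi_P a b n y)\<^sup>2 * jacobi_weight a b y)"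

definition jacobi_T :: "real \<Rightarrow> real \<Rightarrow> real \<Rightarrow> (nat \<Rightarrow> real) \<Rightarrow> nat \<Rightarrow> real" where
  "jacobi_T a b r f n =
     (\<Sum>m. f m * (LINT x:{-r..r}|lborel.
                     jacobi_p a b m x * jacobi_p a b n x * jacobi_weight a b x))"

text \<open>ell^p norm of a sequence (meaningful when the p-th powers are summable).\<close>
definition lp_norm :: "real \<Rightarrow> (nat \<Rightarrow> real) \<Rightarrow> real" where
  "lp_norm p g = (\<Sum>n. \<bar>g n\<bar> powr p) powr (1 / p)"

end

theory Submission
  imports Defs
begin

section \<open>The differential equation of the Jacobi polynomials\<close>

definition uv_monomial :: "nat \<Rightarrow> nat \<Rightarrow> real \<Rightarrow> real" where
  "uv_monomial s k x = ((x - 1) / 2) ^ s * ((x + 1) / 2) ^ k"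

definition uv_monomial' :: "nat \<Rightarrow> nat \<Rightarrow> real \<Rightarrow> real" where
  "uv_monomial' s k x = (real s * uv_monomial (s - 1) k x + real k * uv_monomial s (k - 1) x) / 2"

definition uv_monomial'' :: "nat \<Rightarrow> nat \<Rightarrow> real \<Rightarrow> real" where
  "uv_monomial'' s k x = (real s * uv_monomial' (s - 1) k x + real k * uv_monomial' s (k - 1) x) / 2"

definition jacobi_coeff :: "real \<Rightarrow> real \<Rightarrow> nat \<Rightarrow> nat \<Rightarrow> real" where
  "jacobi_coeff a b n s = ((real n + a) gchoose (n - s)) * ((real n + b) gchoose s)"

definition jacobi_P' :: "real \<Rightarrow> real \<Rightarrow> nat \<Rightarrow> real \<Rightarrow> real" where
  "jacobi_P' a b n x = (\<Sum>s\<le>n. jacobi_coeff a b n s * uv_monomial' s (n - s) x)"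

definition jacobi_P'' :: "real \<Rightarrow> real \<Rightarrow> nat \<Rightarrow> real \<Rightarrow> real" where
  "jacobi_P'' a b n x = (\<Sum>s\<le>n. jacobi_coeff a b n s * uv_monomial'' s (n - s) x)"

definition jacobi_eigenvalue :: "real \<Rightarrow> real \<Rightarrow> nat \<Rightarrow> real" where
  "jacobi_eigenvalue a b n = real n * (real n + a + b + 1)"

lemma jacobi_P_eq_sum_uv_monomial:
  "jacobi_P a b n x = (\<Sum>s\<le>n. jacobi_coeff a b n s * uv_monomial s (n - s) x)"
  by (simp add: jacobi_P_def jacobi_coeff_def uv_monomial_def mult.assoc)

lemma uv_monomial_has_derivative:
  "(uv_monomial s k has_real_derivative uv_monomial' s k x) (at x within S)"
  unfolding uv_monomial_def[abs_def] uv_monomial'_def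
  by (auto intro!: derivative_eq_intros simp: uv_monomial_def algebra_simps)

lemma uv_monomial'_has_derivative:
  "(uv_monomial' s k has_real_derivative uv_monomial'' s k x) (at x within S)"
proof -
  have "uv_monomial' s k = (\<lambda>x. (real s * uv_monomial (s - 1) k x + real k * uv_monomial s (k - 1) x) / 2)"
    by (simp add: fun_eq_iff uv_monomial'_def)
  then show ?thesis
    unfolding uv_monomial''_def by (auto intro!: derivative_eq_intros uv_monomial_has_derivative)
qed

lemma jacobi_P_has_derivative:
  "(jacobi_P a b n has_real_derivative jacobi_P' a b n x) (at x within S)"
  unfolding jacobi_P_eq_sum_uv_monomial[abs_def] jacobi_P'_def
  by (intro DERIV_sum DERIV_cmult uv_monomial_has_derivative)

lemma jacobi_P'_has_derivative:
  "(jacobi_P' a b n has_real_derivative jacobi_P'' a b n x) (at x within S)"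
  unfolding jacobi_P'_def[abs_def] jacobi_P''_def
  by (intro DERIV_sum DERIV_cmult uv_monomial'_has_derivative)

lemma continuous_on_jacobi_P: "continuous_on S (jacobi_P a b n)"
  using jacobi_P_has_derivative by (meson DERIV_continuous continuous_at_imp_continuous_on)

lemma continuous_on_jacobi_P': "continuous_on S (jacobi_P' a b n)"
  using jacobi_P'_has_derivative by (meson DERIV_continuous continuous_at_imp_continuous_on)

lemma uv_monomial_Suc:
  "uv_monomial (Suc s) k x = (x - 1) / 2 * uv_monomial s k x"
  "uv_monomial s (Suc k) x = (x + 1) / 2 * uv_monomial s k x"
  by (simp_all add: uv_monomial_def)

lemma uv_monomial_pred:
  assumes "x \<noteq> 1" "x \<noteq> -1"
  shows "real s * uv_monomial (s - 1) k x = real s * uv_monomial s k x / ((x - 1) / 2)"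
    and "real k * uv_monomial s (k - 1) x = real k * uv_monomial s k x / ((x + 1) / 2)"
proof -
  show "real s * uv_monomial (s - 1) k x = real s * uv_monomial s k x / ((x - 1) / 2)"
    using assms by (cases s) (simp_all add: uv_monomial_Suc)
  show "real k * uv_monomial s (k - 1) x = real k * uv_monomial s k x / ((x + 1) / 2)"
    using assms by (cases k) (simp_all add: uv_monomial_Suc)
qed

lemma uv_monomial'_eq:
  assumes "x \<noteq> 1" "x \<noteq> -1"
  shows "uv_monomial' s k x = uv_monomial s k x * (real s / ((x - 1) / 2) + real k / ((x + 1) / 2)) / 2"
  unfolding uv_monomial'_def uv_monomial_pred[OF assms] by (simp add: field_simps)

lemma uv_monomial_ode:
  fixes a b x :: real
  assumes "-1 < x" "x < 1"
  defines "u \<equiv> (x - 1) / 2" and "v \<equiv> (x + 1) / 2"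
  shows "(1 - x\<^sup>2) * uv_monomial'' s k x + (b - a - (a + b + 2) * x) * uv_monomial' s k x =
     - uv_monomial s k x * (real s * (real s + a) * v / u
         + (2 * real s * real k + (b + 1) * real s + (a + 1) * real k)
         + real k * (real k + b) * u / v)"
proof -
  have x: "x \<noteq> 1" "x \<noteq> -1" and uv: "u \<noteq> 0" "v \<noteq> 0"
    using assms by (auto simp: u_def v_def)
  have s_term: "real s * uv_monomial' (s - 1) k x = uv_monomial s k x * (real s * (real s - 1) / u\<^sup>2 + real s * real k / (u * v)) / 2"
    using uv by (cases s) (simp_all add: uv_monomial'_eq[OF x, folded u_def v_def] uv_monomial_Suc[of _ _ x, folded u_def v_def] field_simps power2_eq_square)
  have k_term: "real k * uv_monomial' s (k - 1) x = uv_monomial s k x * (real s * real k / (u * v) + real k * (real k - 1) / v\<^sup>2) / 2"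
    using uv by (cases k) (simp_all add: uv_monomial'_eq[OF x, folded u_def v_def] uv_monomial_Suc[of _ _ x, folded u_def v_def] field_simps power2_eq_square)
  have second: "uv_monomial'' s k x = uv_monomial s k x *
      (real s * (real s - 1) / u\<^sup>2 + 2 * real s * real k / (u * v) + real k * (real k - 1) / v\<^sup>2) / 4"
    unfolding uv_monomial''_def s_term k_term by (simp add: field_simps)
  have coeffs: "1 - x\<^sup>2 = - 4 * u * v" "b - a - (a + b + 2) * x = - 2 * (b + 1) * u - 2 * (a + 1) * v"
    by (simp_all add: u_def v_def field_simps power2_eq_square)
  show ?thesis
    unfolding coeffs second uv_monomial'_eq[OF x, folded u_def v_def] using uv
    by (simp add: field_simps power2_eq_square)
qed

lemma sum_atMost_shift_eq:
  fixes g h :: "nat \<Rightarrow> 'a::comm_monoid_add"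
  assumes "g 0 = 0" "h n = 0" "\<And>t. t < n \<Longrightarrow> g (Suc t) = h t"
  shows "(\<Sum>s\<le>n. g s) = (\<Sum>s\<le>n. h s)"
proof (cases n)
  case (Suc m)
  have "(\<Sum>s\<le>n. g s) = g 0 + (\<Sum>t\<le>m. g (Suc t))"
    unfolding Suc by (rule sum.atMost_Suc_shift)
  also have "\<dots> = (\<Sum>t\<le>m. h t)"
    using assms by (auto simp: Suc intro!: sum.cong)
  also have "\<dots> = (\<Sum>s\<le>n. h s)"
    using assms by (simp add: Suc)
  finally show ?thesis .
qed (use assms in simp)

lemma gbinomial_Suc_mult: "of_nat (Suc k) * ((x::real) gchoose Suc k) = (x - of_nat k) * (x gchoose k)"
  using gbinomial_absorption[of k x] gbinomial_absorb_comp[of x k] by simp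

lemma jacobi_coeff_Suc:
  assumes "t < n"
  shows "jacobi_coeff a b n (Suc t) * (real (Suc t) * (real (Suc t) + a))
       = jacobi_coeff a b n t * (real (n - t) * (real (n - t) + b))"
proof -
  have n_t: "n - t = Suc (n - Suc t)" using assms by simp
  have b_step: "real (Suc t) * ((real n + b) gchoose Suc t) = (real n + b - real t) * ((real n + b) gchoose t)"
    using gbinomial_Suc_mult[of t "real n + b"] by simp
  have a_step: "real (n - t) * ((real n + a) gchoose (n - t)) = (real (Suc t) + a) * ((real n + a) gchoose (n - Suc t))"
    unfolding n_t using gbinomial_Suc_mult[of "n - Suc t" "real n + a"] assms by (simp add: of_nat_diff)
  have "jacobi_coeff a b n (Suc t) * (real (Suc t) * (real (Suc t) + a)) =
     ((real (Suc t) + a) * ((real n + a) gchoose (n - Suc t))) * (real (Suc t) * ((real n + b) gchoose Suc t))"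
    unfolding jacobi_coeff_def by (simp add: algebra_simps)
  also have "\<dots> = (real (n - t) * ((real n + a) gchoose (n - t))) * ((real n + b - real t) * ((real n + b) gchoose t))"
    unfolding a_step b_step ..
  also have "\<dots> = jacobi_coeff a b n t * (real (n - t) * (real (n - t) + b))"
    unfolding jacobi_coeff_def using assms by (simp add: of_nat_diff algebra_simps)
  finally show ?thesis .
qed

theorem jacobi_ode:
  assumes "-1 < x" "x < 1"
  shows "(1 - x\<^sup>2) * jacobi_P'' a b n x + (b - a - (a + b + 2) * x) * jacobi_P' a b n x
       = - jacobi_eigenvalue a b n * jacobi_P a b n x"
proof -
  define u v where "u = (x - 1) / 2" and "v = (x + 1) / 2"
  have uv: "u \<noteq> 0" "v \<noteq> 0" using assms by (auto simp: u_def v_def)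
  define c m where "c s = jacobi_coeff a b n s" and "m s = uv_monomial s (n - s) x" for s
  define A B M where "A s = real s * (real s + a)" and "B s = real (n - s) * (real (n - s) + b)"
    and "M s = 2 * real s * real (n - s) + (b + 1) * real s + (a + 1) * real (n - s)" for s
  have m_Suc: "m (Suc t) * v / u = m t" "m t * u / v = m (Suc t)" if "t < n" for t
  proof -
    have "n - t = Suc (n - Suc t)" using that by simp
    then have "m t = v * uv_monomial t (n - Suc t) x" "m (Suc t) = u * uv_monomial t (n - Suc t) x"
      by (simp_all add: m_def u_def v_def uv_monomial_Suc)
    then show "m (Suc t) * v / u = m t" "m t * u / v = m (Suc t)" using uv by simp_all
  qed
  have c_Suc: "c (Suc t) * A (Suc t) = c t * B t" if "t < n" for t
    using jacobi_coeff_Suc[OF that] by (simp add: c_def A_def B_def)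
  have shift_v: "(\<Sum>s\<le>n. c s * A s * m s * v / u) = (\<Sum>s\<le>n. c s * B s * m s)"
  proof (rule sum_atMost_shift_eq)
    fix t assume t: "t < n"
    have "c (Suc t) * A (Suc t) * m (Suc t) * v / u = (c (Suc t) * A (Suc t)) * (m (Suc t) * v / u)"
      by simp
    then show "c (Suc t) * A (Suc t) * m (Suc t) * v / u = c t * B t * m t"
      unfolding c_Suc[OF t] m_Suc(1)[OF t] by simp
  qed (simp_all add: A_def B_def)
  have shift_u: "(\<Sum>s\<le>n. c s * A s * m s) = (\<Sum>s\<le>n. c s * B s * m s * u / v)"
  proof (rule sum_atMost_shift_eq)
    fix t assume t: "t < n"
    have "c t * B t * m t * u / v = (c t * B t) * (m t * u / v)"
      by simp
    then show "c (Suc t) * A (Suc t) * m (Suc t) = c t * B t * m t * u / v"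
      unfolding c_Suc[OF t, symmetric] m_Suc(2)[OF t] by simp
  qed (simp_all add: A_def B_def)
  have "(1 - x\<^sup>2) * jacobi_P'' a b n x + (b - a - (a + b + 2) * x) * jacobi_P' a b n x
      = (\<Sum>s\<le>n. c s * ((1 - x\<^sup>2) * uv_monomial'' s (n - s) x
                             + (b - a - (a + b + 2) * x) * uv_monomial' s (n - s) x))"
    unfolding jacobi_P''_def jacobi_P'_def sum_distrib_left sum.distrib[symmetric] c_def
    by (simp add: algebra_simps)
  also have "\<dots> = (\<Sum>s\<le>n. - (c s * A s * m s * v / u) - c s * M s * m s - c s * B s * m s * u / v)"
    unfolding uv_monomial_ode[OF assms, folded u_def v_def]
    using uv by (intro sum.cong refl) (simp add: m_def A_def B_def M_def field_simps)
  also have "\<dots> = - (\<Sum>s\<le>n. c s * B s * m s) - (\<Sum>s\<le>n. c s * M s * m s) - (\<Sum>s\<le>n. c s * A s * m s)"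
    unfolding sum_subtractf sum_negf shift_v shift_u ..
  also have "\<dots> = - (\<Sum>s\<le>n. c s * m s * (B s + M s + A s))"
    by (simp add: distrib_left sum.distrib mult_ac)
  also have "\<dots> = - (\<Sum>s\<le>n. c s * m s * jacobi_eigenvalue a b n)"
  proof -
    have "B s + M s + A s = jacobi_eigenvalue a b n" if "s \<le> n" for s
      using that by (simp add: A_def B_def M_def jacobi_eigenvalue_def of_nat_diff algebra_simps)
    then show ?thesis by (intro arg_cong[where f = uminus] sum.cong) simp_all
  qed
  also have "\<dots> = - jacobi_eigenvalue a b n * jacobi_P a b n x"
    unfolding jacobi_P_eq_sum_uv_monomial sum_distrib_left c_def m_def by (simp add: sum_negf mult_ac)
  finally show ?thesis .
qed

section \<open>The Jacobi weight\<close>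

lemma jacobi_weight_nonneg: "0 \<le> jacobi_weight a b x"
  by (simp add: jacobi_weight_def)

lemma jacobi_weight_pos: "-1 < x \<Longrightarrow> x < 1 \<Longrightarrow> 0 < jacobi_weight a b x"
  by (simp add: jacobi_weight_def)

lemma jacobi_weight_endpoints [simp]: "jacobi_weight a b 1 = 0" "jacobi_weight a b (-1) = 0"
  by (simp_all add: jacobi_weight_def)

lemma jacobi_weight_borel [measurable]: "jacobi_weight a b \<in> borel_measurable borel"
  unfolding jacobi_weight_def[abs_def] by measurable

lemma continuous_on_jacobi_weight: "{c..d} \<subseteq> {-1<..<1} \<Longrightarrow> continuous_on {c..d} (jacobi_weight a b)"
  unfolding jacobi_weight_def[abs_def] by (intro continuous_intros) auto

lemma one_minus_square_mult_jacobi_weight: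
  assumes "x \<in> {-1..1}"
  shows "(1 - x\<^sup>2) * jacobi_weight a b x = jacobi_weight (a + 1) (b + 1) x"
proof (cases "x = 1 \<or> x = -1")
  case False
  then have "0 < 1 - x" "0 < 1 + x" using assms by auto
  then show ?thesis
    by (simp add: jacobi_weight_def powr_add power2_eq_square algebra_simps)
qed auto

lemma jacobi_weight_add_one_has_derivative:
  assumes "-1 < x" "x < 1"
  shows "(jacobi_weight (a + 1) (b + 1) has_real_derivative
           jacobi_weight a b x * (b - a - (a + b + 2) * x)) (at x)"
proof -
  have pos: "0 < 1 - x" "0 < 1 + x" using assms by auto
  have "(jacobi_weight (a + 1) (b + 1) has_real_derivative
      (1 - x) powr (a + 1) * ((b + 1) * (1 + x) powr (b + 1 - real 1) * 1)
      + (a + 1) * (1 - x) powr (a + 1 - real 1) * (-1) * (1 + x) powr (b + 1)) (at x)"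
    unfolding jacobi_weight_def[abs_def]
    by (rule DERIV_mult'[OF DERIV_fun_powr[of "\<lambda>x. 1 - x" "-1" x "a + 1"] DERIV_fun_powr[of "\<lambda>x. 1 + x" 1 x "b + 1"]])
       (use pos in \<open>auto intro!: derivative_eq_intros\<close>)
  then show ?thesis
    using pos by (simp add: jacobi_weight_def powr_add algebra_simps)
qed

lemma continuous_on_jacobi_weight_add_one:
  "-1 < a \<Longrightarrow> -1 < b \<Longrightarrow> continuous_on {-1..1} (jacobi_weight (a + 1) (b + 1))"
  unfolding jacobi_weight_def[abs_def] by (intro continuous_intros continuous_on_powr') auto

lemma powr_le_two_powr_abs:
  fixes t c :: real
  assumes "1 \<le> t" "t \<le> 2"
  shows "t powr c \<le> 2 powr \<bar>c\<bar>"
proof -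
  have "t powr c \<le> t powr \<bar>c\<bar>" using assms by (intro powr_mono) auto
  also have "\<dots> \<le> 2 powr \<bar>c\<bar>" using assms by (intro powr_mono2) auto
  finally show ?thesis .
qed

lemma jacobi_weight_le:
  assumes "x \<in> {-1..1}" "c \<le> a" "c \<le> b"
  shows "jacobi_weight a b x \<le> (2 powr \<bar>a\<bar> + 2 powr \<bar>b\<bar>) * (1 - \<bar>x\<bar>) powr c"
proof (cases "x \<ge> 0")
  case True
  have "jacobi_weight a b x \<le> (1 - x) powr c * 2 powr \<bar>b\<bar>"
    unfolding jacobi_weight_def using assms True by (intro mult_mono powr_mono' powr_le_two_powr_abs) auto
  also have "\<dots> \<le> (1 - x) powr c * (2 powr \<bar>a\<bar> + 2 powr \<bar>b\<bar>)"
    by (intro mult_left_mono) auto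
  finally show ?thesis
    using True by (simp add: mult.commute)
next
  case False
  have "jacobi_weight a b x \<le> 2 powr \<bar>a\<bar> * (1 + x) powr c"
    unfolding jacobi_weight_def using assms False by (intro mult_mono powr_mono' powr_le_two_powr_abs) auto
  also have "\<dots> \<le> (2 powr \<bar>a\<bar> + 2 powr \<bar>b\<bar>) * (1 + x) powr c"
    by (intro mult_right_mono) auto
  finally show ?thesis
    using False by simp
qed

lemma has_integral_one_minus_powr:
  fixes c r :: real
  assumes "-1 < c" "r \<le> 1"
  shows "((\<lambda>x. (1 - x) powr c) has_integral (1 - r) powr (c + 1) / (c + 1)) {r..1}"
proof -
  define G where "G x = - ((1 - x) powr (c + 1)) / (c + 1)" for x
  have "((\<lambda>x. (1 - x) powr c) has_integral G 1 - G r) {r..1}"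
  proof (rule fundamental_theorem_of_calculus_interior[OF assms(2)])
    show "continuous_on {r..1} G"
      unfolding G_def using assms by (intro continuous_intros continuous_on_powr') auto
    fix x assume "x \<in> {r<..<1}"
    then have "(G has_real_derivative (1 - x) powr c) (at x)"
      unfolding G_def[abs_def] using assms
      by (auto intro!: derivative_eq_intros DERIV_fun_powr[where m = "-1", THEN DERIV_cong])
    then show "(G has_vector_derivative (1 - x) powr c) (at x)"
      by (simp add: has_real_derivative_iff_has_vector_derivative)
  qed
  then show ?thesis using assms by (simp add: G_def)
qed

lemma has_integral_one_plus_powr:
  fixes c r :: real
  assumes "-1 < c" "r \<le> 1"
  shows "((\<lambda>x. (1 + x) powr c) has_integral (1 - r) powr (c + 1) / (c + 1)) {-1..-r}"
  using has_integral_reflect_real[of "\<lambda>x::real. (1 - x) powr c" _ 1 r] has_integral_one_minus_powr[OF assms]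
  by simp

lemma jacobi_weight_absolutely_integrable:
  assumes "-1 < a" "-1 < b"
  shows "jacobi_weight a b absolutely_integrable_on {-1..1}"
proof -
  define c where "c = min a b"
  define K where "K = 2 powr \<bar>a\<bar> + 2 powr \<bar>b\<bar>"
  define g where "g x = K * (1 - x) powr c + K * (1 + x) powr c" for x
  have c: "-1 < c" using assms by (simp add: c_def)
  have "(g has_integral K * (2 powr (c + 1) / (c + 1)) + K * (2 powr (c + 1) / (c + 1))) {-1..1}"
    unfolding g_def using has_integral_one_minus_powr[OF c, of "-1"] has_integral_one_plus_powr[OF c, of "-1"]
    by (intro has_integral_add has_integral_mult_right) auto
  then have "g integrable_on {-1..1}" by blast
  moreover have "norm (jacobi_weight a b x) \<le> g x" if "x \<in> {-1..1}" for x
  proof -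
    have "jacobi_weight a b x \<le> K * (1 - \<bar>x\<bar>) powr c"
      unfolding K_def using that by (intro jacobi_weight_le) (auto simp: c_def)
    also have "\<dots> \<le> g x"
      unfolding g_def using that by (cases "x \<ge> 0") (auto simp: K_def abs_if)
    finally show ?thesis using jacobi_weight_nonneg[of a b x] by simp
  qed
  moreover have "jacobi_weight a b \<in> borel_measurable (lebesgue_on {-1..1})"
    by (rule measurable_restrict_space1, rule measurable_completion) simp
  ultimately show ?thesis
    by (intro measurable_bounded_by_integrable_imp_absolutely_integrable) auto
qed

section \<open>Weighted inner products and Bessel's inequality\<close>

definition bounded_measurable_on :: "real set \<Rightarrow> (real \<Rightarrow> real) \<Rightarrow> bool" where
  "bounded_measurable_on S h \<longleftrightarrow> h \<in> borel_measurable (lebesgue_on S) \<and> bounded (h ` S)"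

definition weighted_inner :: "real set \<Rightarrow> (real \<Rightarrow> real) \<Rightarrow> (real \<Rightarrow> real) \<Rightarrow> (real \<Rightarrow> real) \<Rightarrow> real" where
  "weighted_inner S W f g = integral S (\<lambda>x. f x * g x * W x)"

lemma bounded_measurable_on_continuous:
  "compact S \<Longrightarrow> continuous_on S h \<Longrightarrow> bounded_measurable_on S h"
  unfolding bounded_measurable_on_def
  by (metis compact_continuous_image compact_imp_bounded
      continuous_imp_measurable_on_sets_lebesgue lmeasurable_compact fmeasurableD)

lemma bounded_measurable_on_borel:
  assumes "h \<in> borel_measurable borel" "bounded (h ` S)"
  shows "bounded_measurable_on S h"
proof -
  have "h \<in> borel_measurable (lebesgue_on S)"
    by (rule measurable_restrict_space1, rule measurable_completion) (simp add: assms)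
  with assms show ?thesis by (simp add: bounded_measurable_on_def)
qed

lemma bounded_measurable_on_const: "bounded_measurable_on S (\<lambda>x. c)"
  by (auto simp: bounded_measurable_on_def bounded_real)

lemma bounded_measurable_on_add:
  "bounded_measurable_on S f \<Longrightarrow> bounded_measurable_on S g \<Longrightarrow> bounded_measurable_on S (\<lambda>x. f x + g x)"
  unfolding bounded_measurable_on_def by (auto intro: bounded_plus_comp)

lemma bounded_measurable_on_diff:
  "bounded_measurable_on S f \<Longrightarrow> bounded_measurable_on S g \<Longrightarrow> bounded_measurable_on S (\<lambda>x. f x - g x)"
  unfolding bounded_measurable_on_def by (auto intro: bounded_minus_comp)

lemma bounded_measurable_on_mult:
  assumes "bounded_measurable_on S f" "bounded_measurable_on S g"
  shows "bounded_measurable_on S (\<lambda>x. f x * g x)"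
proof -
  obtain B C where "\<forall>x\<in>S. \<bar>f x\<bar> \<le> B" "\<forall>x\<in>S. \<bar>g x\<bar> \<le> C"
    using assms unfolding bounded_measurable_on_def bounded_real by auto
  then have "\<forall>x\<in>S. \<bar>f x * g x\<bar> \<le> B * C"
    by (auto simp: abs_mult intro!: mult_mono)
  then show ?thesis
    using assms unfolding bounded_measurable_on_def bounded_real by auto
qed

lemma bounded_measurable_on_cmult:
  "bounded_measurable_on S f \<Longrightarrow> bounded_measurable_on S (\<lambda>x. c * f x)"
  by (intro bounded_measurable_on_mult bounded_measurable_on_const)

lemma bounded_measurable_on_sum:
  "finite I \<Longrightarrow> (\<And>i. i \<in> I \<Longrightarrow> bounded_measurable_on S (f i))
    \<Longrightarrow> bounded_measurable_on S (\<lambda>x. \<Sum>i\<in>I. f i x)"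
  by (induction I rule: finite_induct) (auto intro: bounded_measurable_on_add bounded_measurable_on_const)

context
  fixes S :: "real set" and W :: "real \<Rightarrow> real"
  assumes S: "S \<in> sets lebesgue" and W: "W absolutely_integrable_on S"
begin

lemma bounded_measurable_on_mult_absolutely_integrable:
  "bounded_measurable_on S h \<Longrightarrow> (\<lambda>x. h x * W x) absolutely_integrable_on S"
  unfolding bounded_measurable_on_def
  by (intro absolutely_integrable_bounded_measurable_product_real S W) auto

lemma weighted_inner_integrable:
  "bounded_measurable_on S f \<Longrightarrow> bounded_measurable_on S g \<Longrightarrow> (\<lambda>x. f x * g x * W x) integrable_on S"
  using bounded_measurable_on_mult_absolutely_integrable[of "\<lambda>x. f x * g x"]
  by (auto intro: bounded_measurable_on_mult simp: absolutely_integrable_on_def)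

lemma weighted_inner_diff_left:
  assumes "bounded_measurable_on S f" "bounded_measurable_on S h" "bounded_measurable_on S g"
  shows "weighted_inner S W (\<lambda>x. f x - h x) g = weighted_inner S W f g - weighted_inner S W h g"
  unfolding weighted_inner_def
  by (simp add: left_diff_distrib integral_diff[symmetric] weighted_inner_integrable assms)

lemma weighted_inner_sum_left:
  assumes "finite I" "\<And>i. i \<in> I \<Longrightarrow> bounded_measurable_on S (f i)" "bounded_measurable_on S g"
  shows "weighted_inner S W (\<lambda>x. \<Sum>i\<in>I. f i x) g = (\<Sum>i\<in>I. weighted_inner S W (f i) g)"
  unfolding weighted_inner_def
  by (subst integral_sum[symmetric]) (auto intro: weighted_inner_integrable assms simp: sum_distrib_right)

end

lemma weighted_inner_commute: "weighted_inner S W f g = weighted_inner S W g f"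
  unfolding weighted_inner_def by (simp add: mult.commute mult.left_commute)

lemma weighted_inner_cmult_left: "weighted_inner S W (\<lambda>x. c * f x) g = c * weighted_inner S W f g"
  unfolding weighted_inner_def by (simp add: mult.assoc)

lemma weighted_inner_cmult_right: "weighted_inner S W f (\<lambda>x. c * g x) = c * weighted_inner S W f g"
  using weighted_inner_cmult_left weighted_inner_commute by metis

theorem bessel_inequality:
  assumes S: "S \<in> sets lebesgue" and W: "W absolutely_integrable_on S" "\<And>x. x \<in> S \<Longrightarrow> 0 \<le> W x"
    and I: "finite I" and g: "bounded_measurable_on S g" and e: "\<And>n. n \<in> I \<Longrightarrow> bounded_measurable_on S (e n)"
    and orthonormal: "\<And>m n. m \<in> I \<Longrightarrow> n \<in> I \<Longrightarrow> weighted_inner S W (e m) (e n) = (if m = n then 1 else 0)"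
  shows "(\<Sum>n\<in>I. (weighted_inner S W g (e n))\<^sup>2) \<le> weighted_inner S W g g"
proof -
  note bm = bounded_measurable_on_sum bounded_measurable_on_cmult bounded_measurable_on_diff
  define c where "c n = weighted_inner S W g (e n)" for n
  define E where "E x = (\<Sum>n\<in>I. c n * e n x)" for x
  have E: "bounded_measurable_on S E"
    unfolding E_def[abs_def] by (intro bm I e)
  have E_left: "weighted_inner S W E h = (\<Sum>n\<in>I. c n * weighted_inner S W (e n) h)"
    if "bounded_measurable_on S h" for h
    unfolding E_def[abs_def]
    by (subst weighted_inner_sum_left[OF S W(1) I]) (auto intro: bm e that simp: weighted_inner_cmult_left)
  have E_g: "weighted_inner S W E g = (\<Sum>n\<in>I. (c n)\<^sup>2)"
    unfolding E_left[OF g] by (simp add: c_def weighted_inner_commute[of S W g] power2_eq_square)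
  have E_E: "weighted_inner S W E E = (\<Sum>n\<in>I. (c n)\<^sup>2)"
  proof -
    have "weighted_inner S W (e m) E = c m" if "m \<in> I" for m
      unfolding weighted_inner_commute[of S W "e m"] E_left[OF e[OF that]]
      using I that by (simp add: orthonormal if_distrib cong: if_cong)
    then show ?thesis
      unfolding E_left[OF E] by (simp add: power2_eq_square)
  qed
  have "0 \<le> weighted_inner S W (\<lambda>x. g x - E x) (\<lambda>x. g x - E x)"
    unfolding weighted_inner_def using W(2)
    by (intro integral_nonneg weighted_inner_integrable[OF S W(1)] bm(3)[OF g E]) auto
  also have "\<dots> = weighted_inner S W g (\<lambda>x. g x - E x) - weighted_inner S W E (\<lambda>x. g x - E x)"
    by (rule weighted_inner_diff_left[OF S W(1) g E bm(3)[OF g E]])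
  also have "\<dots> = weighted_inner S W g g - weighted_inner S W E g - (weighted_inner S W g E - weighted_inner S W E E)"
    unfolding weighted_inner_commute[of S W g "\<lambda>x. g x - E x"] weighted_inner_commute[of S W E "\<lambda>x. g x - E x"]
      weighted_inner_diff_left[OF S W(1) g E g] weighted_inner_diff_left[OF S W(1) g E E] ..
  also have "\<dots> = weighted_inner S W g g - (\<Sum>n\<in>I. (c n)\<^sup>2)"
    using E_g E_E weighted_inner_commute[of S W g E] by simp
  finally show ?thesis unfolding c_def by simp
qed

section \<open>Orthogonality of the Jacobi polynomials\<close>

locale jacobi =
  fixes a b :: real
  assumes a_gt: "-1 < a" and b_gt: "-1 < b"
begin

abbreviation inner_w :: "(real \<Rightarrow> real) \<Rightarrow> (real \<Rightarrow> real) \<Rightarrow> real" where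
  "inner_w \<equiv> weighted_inner {-1..1} (jacobi_weight a b)"

abbreviation inner_w1 :: "(real \<Rightarrow> real) \<Rightarrow> (real \<Rightarrow> real) \<Rightarrow> real" where
  "inner_w1 \<equiv> weighted_inner {-1..1} (jacobi_weight (a + 1) (b + 1))"

lemma weight_absolutely_integrable:
  "jacobi_weight a b absolutely_integrable_on {-1..1}"
  "jacobi_weight (a + 1) (b + 1) absolutely_integrable_on {-1..1}"
  using jacobi_weight_absolutely_integrable a_gt b_gt by simp_all

lemma inner_w_integrable:
  "bounded_measurable_on {-1..1} f \<Longrightarrow> bounded_measurable_on {-1..1} g
    \<Longrightarrow> (\<lambda>x. f x * g x * jacobi_weight a b x) integrable_on {-1..1}"
  by (rule weighted_inner_integrable[OF _ weight_absolutely_integrable(1)]) auto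

lemma inner_w1_integrable:
  "bounded_measurable_on {-1..1} f \<Longrightarrow> bounded_measurable_on {-1..1} g
    \<Longrightarrow> (\<lambda>x. f x * g x * jacobi_weight (a + 1) (b + 1) x) integrable_on {-1..1}"
  by (rule weighted_inner_integrable[OF _ weight_absolutely_integrable(2)]) auto

lemma bounded_measurable_on_jacobi_P: "bounded_measurable_on {-1..1} (jacobi_P a b n)"
  and bounded_measurable_on_jacobi_P': "bounded_measurable_on {-1..1} (jacobi_P' a b n)"
  by (simp_all add: bounded_measurable_on_continuous continuous_on_jacobi_P continuous_on_jacobi_P')

lemma jacobi_eigenvalue_strict_mono: "strict_mono (jacobi_eigenvalue a b)"
proof (rule strict_monoI)
  fix m n :: nat assume "m < n"
  then have "0 < (real n - real m) * (real n + real m + a + b + 1)"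
    using a_gt b_gt by (intro mult_pos_pos) auto
  then show "jacobi_eigenvalue a b m < jacobi_eigenvalue a b n"
    by (simp add: jacobi_eigenvalue_def algebra_simps)
qed

lemma jacobi_eigenvalue_pos: "0 < n \<Longrightarrow> 0 < jacobi_eigenvalue a b n"
  using strict_monoD[OF jacobi_eigenvalue_strict_mono, of 0 n] by (simp add: jacobi_eigenvalue_def)

text \<open>Integrating the differential equation against a test function g, written in the self-adjoint
  form ((1 - x^2) w P')' = - lambda w P; the boundary terms vanish because the weight with exponents
  a + 1 and b + 1 is zero at both endpoints.\<close>

theorem jacobi_green:
  assumes S: "finite S" and g: "continuous_on {-1..1} g"
    and g': "\<And>x. x \<in> {-1<..<1} - S \<Longrightarrow> (g has_real_derivative g' x) (at x)"
    and g'_bm: "bounded_measurable_on {-1..1} g'"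
  shows "inner_w1 g' (jacobi_P' a b n) = jacobi_eigenvalue a b n * inner_w g (jacobi_P a b n)"
proof -
  define W1 where "W1 = jacobi_weight (a + 1) (b + 1)"
  define f where "f x = g x * W1 x * jacobi_P' a b n x" for x
  define F where "F x = g' x * jacobi_P' a b n x * W1 x
      - jacobi_eigenvalue a b n * (g x * jacobi_P a b n x * jacobi_weight a b x)" for x
  have "(F has_integral f 1 - f (-1)) {-1..1}"
  proof (rule fundamental_theorem_of_calculus_interior_strong[OF S])
    show "continuous_on {-1..1} f"
      unfolding f_def W1_def
      by (intro continuous_intros g continuous_on_jacobi_weight_add_one a_gt b_gt continuous_on_jacobi_P')
    fix x assume x: "x \<in> {-1<..<1} - S"
    then have "-1 < x" "x < 1" by auto
    have W1x: "W1 x = (1 - x\<^sup>2) * jacobi_weight a b x"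
      using x by (simp add: W1_def one_minus_square_mult_jacobi_weight)
    have "(f has_real_derivative (g' x * W1 x + jacobi_weight a b x * (b - a - (a + b + 2) * x) * g x)
        * jacobi_P' a b n x + jacobi_P'' a b n x * (g x * W1 x)) (at x)"
      unfolding f_def[abs_def] W1_def
      by (intro DERIV_mult g' x jacobi_weight_add_one_has_derivative \<open>-1 < x\<close> \<open>x < 1\<close> jacobi_P'_has_derivative)
    also have "(g' x * W1 x + jacobi_weight a b x * (b - a - (a + b + 2) * x) * g x)
        * jacobi_P' a b n x + jacobi_P'' a b n x * (g x * W1 x)
      = g' x * jacobi_P' a b n x * W1 x + g x * jacobi_weight a b x *
          ((1 - x\<^sup>2) * jacobi_P'' a b n x + (b - a - (a + b + 2) * x) * jacobi_P' a b n x)"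
      unfolding W1x by (simp add: algebra_simps)
    also have "\<dots> = F x"
      unfolding jacobi_ode[OF \<open>-1 < x\<close> \<open>x < 1\<close>] by (simp add: F_def algebra_simps)
    finally have "(f has_real_derivative F x) (at x)" .
    then show "(f has_vector_derivative F x) (at x)"
      by (simp add: has_real_derivative_iff_has_vector_derivative)
  qed auto
  then have "(F has_integral 0) {-1..1}"
    by (simp add: f_def W1_def)
  moreover have "(F has_integral inner_w1 g' (jacobi_P' a b n)
      - jacobi_eigenvalue a b n * inner_w g (jacobi_P a b n)) {-1..1}"
  proof -
    have "bounded_measurable_on {-1..1} g"
      using g by (simp add: bounded_measurable_on_continuous)
    then show ?thesis
      unfolding F_def weighted_inner_def W1_def
      by (intro has_integral_diff has_integral_mult_right integrable_integral inner_w_integrable[OF _ bounded_measurable_on_jacobi_P]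
          inner_w1_integrable[OF g'_bm bounded_measurable_on_jacobi_P'])
  qed
  ultimately have "0 = inner_w1 g' (jacobi_P' a b n) - jacobi_eigenvalue a b n * inner_w g (jacobi_P a b n)"
    by (rule has_integral_unique)
  then show ?thesis by simp
qed

lemma jacobi_P_orthogonal:
  assumes "m \<noteq> n"
  shows "inner_w (jacobi_P a b m) (jacobi_P a b n) = 0"
proof -
  have green: "inner_w1 (jacobi_P' a b k) (jacobi_P' a b l) = jacobi_eigenvalue a b l * inner_w (jacobi_P a b k) (jacobi_P a b l)" for k l
    by (rule jacobi_green[of "{}"]) (auto intro: continuous_on_jacobi_P jacobi_P_has_derivative bounded_measurable_on_jacobi_P')
  have "jacobi_eigenvalue a b n * inner_w (jacobi_P a b m) (jacobi_P a b n)
      = jacobi_eigenvalue a b m * inner_w (jacobi_P a b m) (jacobi_P a b n)"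
    using green[of m n] green[of n m] by (simp add: weighted_inner_commute)
  moreover have "jacobi_eigenvalue a b n \<noteq> jacobi_eigenvalue a b m"
    using strict_mono_eq[OF jacobi_eigenvalue_strict_mono] assms by simp
  ultimately show ?thesis by simp
qed

lemma jacobi_P_at_1: "jacobi_P a b n 1 = (real n + a) gchoose n"
proof -
  have "jacobi_P a b n 1 = (\<Sum>s\<in>{0}. jacobi_coeff a b n s * uv_monomial s (n - s) 1)"
    unfolding jacobi_P_eq_sum_uv_monomial by (rule sum.mono_neutral_right) (auto simp: uv_monomial_def)
  then show ?thesis by (simp add: jacobi_coeff_def uv_monomial_def)
qed

lemma jacobi_P_at_1_pos: "0 < jacobi_P a b n 1"
proof -
  have "0 < (\<Prod>i = 0..<n. real n + a - real i)"
    using a_gt by (intro prod_pos) auto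
  then have "0 < ((real n + a) gchoose n) * fact n"
    using gbinomial_mult_fact'[of "real n + a" n] by simp
  then show ?thesis
    unfolding jacobi_P_at_1 by (simp add: zero_less_mult_iff)
qed

definition sqnorm :: "nat \<Rightarrow> real" where
  "sqnorm n = inner_w (jacobi_P a b n) (jacobi_P a b n)"

text \<open>Near x = 1 the polynomial has the sign of its positive value at 1, and the weight is positive
  inside the interval.\<close>

lemma sqnorm_pos: "0 < sqnorm n"
proof -
  have "\<forall>\<^sub>F x in at 1. 0 < jacobi_P a b n x"
    using jacobi_P_at_1_pos continuous_on_jacobi_P[of UNIV a b n]
    by (intro order_tendstoD) (auto simp: continuous_on_eq_continuous_at isCont_def)
  then obtain d where d: "0 < d" "\<And>x. x \<noteq> 1 \<Longrightarrow> dist x 1 < d \<Longrightarrow> 0 < jacobi_P a b n x"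
    unfolding eventually_at by blast
  define c c' where "c = 1 - min d 1 / 2" and "c' = 1 - min d 1 / 4"
  have c: "0 \<le> c" "c < c'" "c' < 1" using d by (auto simp: c_def c'_def)
  define h where "h x = jacobi_P a b n x * jacobi_P a b n x * jacobi_weight a b x" for x
  have "integral {c..c'} (\<lambda>x. 0) < integral {c..c'} h"
  proof (rule integral_less_real)
    show "continuous_on {c..c'} h"
      unfolding h_def using c by (intro continuous_intros continuous_on_jacobi_P continuous_on_jacobi_weight) auto
    fix x assume "x \<in> {c<..<c'}"
    then show "0 < h x"
      unfolding h_def using c d(2)[of x] by (auto simp: dist_real_def c_def c'_def jacobi_weight_pos)
  qed (use c in auto)
  also have "\<dots> \<le> integral {-1..1} h"
  proof (rule integral_subset_le)
    show h: "h integrable_on {-1..1}"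
      unfolding h_def by (intro inner_w_integrable bounded_measurable_on_jacobi_P)
    show "h integrable_on {c..c'}"
      using c by (intro integrable_on_subinterval[OF h]) auto
  qed (use c in \<open>auto simp: h_def jacobi_weight_nonneg\<close>)
  finally show ?thesis by (simp add: sqnorm_def weighted_inner_def h_def[abs_def])
qed

lemma set_lebesgue_integral_eq_inner_w_integral:
  assumes "h \<in> borel_measurable borel" "bounded_measurable_on {-1..1} h" "{c..d} \<subseteq> {-1..1}"
  shows "(LINT x:{c..d}|lborel. h x * jacobi_weight a b x) = integral {c..d} (\<lambda>x. h x * jacobi_weight a b x)"
proof -
  have "(\<lambda>x. h x * jacobi_weight a b x) absolutely_integrable_on {c..d}"
    by (rule absolutely_integrable_on_subinterval[OF bounded_measurable_on_mult_absolutely_integrable[OF _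
          weight_absolutely_integrable(1) assms(2)] assms(3)]) simp
  moreover have "(\<lambda>x. indicator {c..d} x *\<^sub>R (h x * jacobi_weight a b x)) \<in> borel_measurable lborel"
    using assms(1) by measurable
  ultimately have "set_integrable lborel {c..d} (\<lambda>x. h x * jacobi_weight a b x)"
    unfolding set_integrable_def using integrable_completion by blast
  then show ?thesis by (rule set_borel_integral_eq_integral(2))
qed

lemma jacobi_p_eq: "jacobi_p a b n = (\<lambda>x. inverse (sqrt (sqnorm n)) * jacobi_P a b n x)"
proof -
  have [measurable]: "jacobi_P a b n \<in> borel_measurable borel"
    by (rule borel_measurable_continuous_onI[OF continuous_on_jacobi_P])
  have "(LINT y:{-1..1}|lborel. (jacobi_P a b n y)\<^sup>2 * jacobi_weight a b y) = sqnorm n"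
    unfolding sqnorm_def weighted_inner_def power2_eq_square
    by (subst set_lebesgue_integral_eq_inner_w_integral) (auto intro: bounded_measurable_on_mult bounded_measurable_on_jacobi_P)
  then show ?thesis by (simp add: jacobi_p_def fun_eq_iff field_simps)
qed

lemma jacobi_p_orthonormal: "inner_w (jacobi_p a b m) (jacobi_p a b n) = (if m = n then 1 else 0)"
proof -
  have "inner_w (jacobi_p a b m) (jacobi_p a b n)
      = inverse (sqrt (sqnorm m)) * inverse (sqrt (sqnorm n)) * inner_w (jacobi_P a b m) (jacobi_P a b n)"
    unfolding jacobi_p_eq weighted_inner_cmult_left weighted_inner_cmult_right by (simp only: mult.assoc)
  then show ?thesis
    using jacobi_P_orthogonal[of m n] sqnorm_pos[of n] by (auto simp: sqnorm_def[symmetric] field_simps)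
qed

lemma continuous_on_jacobi_p: "continuous_on S (jacobi_p a b n)"
  unfolding jacobi_p_eq by (intro continuous_intros continuous_on_jacobi_P)

lemma bounded_measurable_on_jacobi_p: "bounded_measurable_on {-1..1} (jacobi_p a b n)"
  by (simp add: bounded_measurable_on_continuous continuous_on_jacobi_p)

theorem jacobi_bessel:
  assumes "finite I" "bounded_measurable_on {-1..1} g"
  shows "(\<Sum>n\<in>I. (inner_w g (jacobi_p a b n))\<^sup>2) \<le> inner_w g g"
  using assms weight_absolutely_integrable(1)
  by (intro bessel_inequality) (auto simp: jacobi_weight_nonneg jacobi_p_orthonormal bounded_measurable_on_jacobi_p)

text \<open>Bessel's inequality for the derivatives, which are orthogonal with respect to the weight with
  exponents a + 1 and b + 1 and have squared norms lambda_n times those of the polynomials.\<close>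

theorem jacobi_bessel_derivative:
  assumes I: "finite I" "0 \<notin> I" and S: "finite S" and g: "continuous_on {-1..1} g"
    and g': "\<And>x. x \<in> {-1<..<1} - S \<Longrightarrow> (g has_real_derivative g' x) (at x)"
    and g'_bm: "bounded_measurable_on {-1..1} g'"
  shows "(\<Sum>n\<in>I. jacobi_eigenvalue a b n * (inner_w g (jacobi_p a b n))\<^sup>2) \<le> inner_w1 g' g'"
proof -
  define lam where "lam = jacobi_eigenvalue a b"
  define e where "e n x = inverse (sqrt (lam n * sqnorm n)) * jacobi_P' a b n x" for n x
  have pos: "0 < lam n * sqnorm n" if "n \<in> I" for n
  proof -
    have "0 < n" using I that by (auto intro: gr0I)
    then show ?thesis using sqnorm_pos[of n] jacobi_eigenvalue_pos[of n] by (simp add: lam_def)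
  qed
  have P'_P': "inner_w1 (jacobi_P' a b m) (jacobi_P' a b n) = lam n * inner_w (jacobi_P a b m) (jacobi_P a b n)" for m n
    unfolding lam_def
    by (rule jacobi_green[of "{}"]) (auto intro: continuous_on_jacobi_P jacobi_P_has_derivative bounded_measurable_on_jacobi_P')
  have "(\<Sum>n\<in>I. (inner_w1 g' (e n))\<^sup>2) \<le> inner_w1 g' g'"
  proof (rule bessel_inequality[OF _ weight_absolutely_integrable(2) _ I(1) g'_bm])
    fix m n assume mn: "m \<in> I" "n \<in> I"
    have "inner_w1 (e m) (e n) = inverse (sqrt (lam m * sqnorm m)) * inverse (sqrt (lam n * sqnorm n))
        * (lam n * inner_w (jacobi_P a b m) (jacobi_P a b n))"
      unfolding e_def weighted_inner_cmult_left weighted_inner_cmult_right P'_P' by (simp only: mult.assoc)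
    then show "inner_w1 (e m) (e n) = (if m = n then 1 else 0)"
      using pos[OF mn(2)] jacobi_P_orthogonal[of m n] by (auto simp: sqnorm_def[symmetric] field_simps)
  qed (auto simp: e_def[abs_def] jacobi_weight_nonneg intro!: bounded_measurable_on_cmult bounded_measurable_on_jacobi_P')
  moreover have "(inner_w1 g' (e n))\<^sup>2 = lam n * (inner_w g (jacobi_p a b n))\<^sup>2" if "n \<in> I" for n
  proof -
    have s: "0 < sqnorm n" by (rule sqnorm_pos)
    then have lam: "0 < lam n" using pos[OF that] by (simp add: zero_less_mult_iff)
    have "inner_w g (jacobi_p a b n) = inverse (sqrt (sqnorm n)) * inner_w g (jacobi_P a b n)"
      unfolding jacobi_p_eq weighted_inner_cmult_right ..
    then have P: "inner_w g (jacobi_P a b n) = sqrt (sqnorm n) * inner_w g (jacobi_p a b n)"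
      using s by simp
    have "inner_w1 g' (e n) = inverse (sqrt (lam n * sqnorm n)) * (lam n * inner_w g (jacobi_P a b n))"
      unfolding e_def weighted_inner_cmult_right lam_def using jacobi_green[OF S g g' g'_bm] by simp
    also have "\<dots> = sqrt (lam n) * inner_w g (jacobi_p a b n)"
      unfolding P using s lam by (simp add: real_sqrt_mult real_div_sqrt field_simps)
    finally show ?thesis
      using lam by (simp add: power_mult_distrib)
  qed
  ultimately show ?thesis
    unfolding lam_def by simp
qed

end

section \<open>A piecewise linear cut-off\<close>

definition ramp :: "real \<Rightarrow> real \<Rightarrow> real \<Rightarrow> real" where
  "ramp r e x = max 0 (min 1 ((\<bar>x\<bar> - (r - e)) / e))"

definition ramp' :: "real \<Rightarrow> real \<Rightarrow> real \<Rightarrow> real" where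
  "ramp' r e x = (if r - e < \<bar>x\<bar> \<and> \<bar>x\<bar> < r then sgn x / e else 0)"

lemma continuous_on_ramp: "0 < e \<Longrightarrow> continuous_on S (ramp r e)"
  unfolding ramp_def[abs_def] by (intro continuous_intros) auto

lemma ramp_bounds: "0 \<le> ramp r e x" "ramp r e x \<le> 1"
  by (auto simp: ramp_def)

lemma ramp_outside:
  "0 < e \<Longrightarrow> \<not> (r - e \<le> \<bar>x\<bar> \<and> \<bar>x\<bar> \<le> r) \<Longrightarrow> ramp r e x = (if \<bar>x\<bar> \<le> r then 0 else 1)"
  by (auto simp: ramp_def field_simps not_le)

lemma abs_ramp'_le: "0 < e \<Longrightarrow> \<bar>ramp' r e x\<bar> \<le> (if r - e \<le> \<bar>x\<bar> \<and> \<bar>x\<bar> \<le> r then 1 / e else 0)"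
  by (auto simp: ramp'_def sgn_if)

lemma ramp'_borel [measurable]: "ramp' r e \<in> borel_measurable borel"
  unfolding ramp'_def[abs_def] by measurable

lemma ramp_has_derivative:
  assumes e: "0 < e" "e \<le> r" and x: "x \<notin> {-r, -(r - e), 0, r - e, r}"
  shows "(ramp r e has_real_derivative ramp' r e x) (at x)"
proof -
  have local: "(ramp r e has_real_derivative ramp' r e x) (at x)"
    if "open U" "x \<in> U" "\<And>y. y \<in> U \<Longrightarrow> ramp r e y = g y" "(g has_real_derivative ramp' r e x) (at x)" for U g
    using has_field_derivative_transform_within_open[OF that(4,1,2)] that(3) by simp
  consider "\<bar>x\<bar> < r - e" | "r - e < x" "x < r" | "-r < x" "x < -(r - e)" | "r < \<bar>x\<bar>"
    using x e by (cases "x \<ge> 0") force+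
  then show ?thesis
  proof cases
    case 1
    then show ?thesis
      by (intro local[of "{-(r - e)<..<r - e}" "\<lambda>_. 0"])
         (use e in \<open>auto simp: ramp_def ramp'_def divide_le_0_iff\<close>)
  next
    case 2
    then show ?thesis
      by (intro local[of "{r - e<..<r}" "\<lambda>y. (y - (r - e)) / e"])
         (use e in \<open>auto intro!: derivative_eq_intros simp: ramp_def ramp'_def field_simps\<close>)
  next
    case 3
    then show ?thesis
      by (intro local[of "{-r<..<-(r - e)}" "\<lambda>y. (- y - (r - e)) / e"])
         (use e in \<open>auto intro!: derivative_eq_intros simp: ramp_def ramp'_def field_simps\<close>)
  next
    case 4
    have "open {y::real. r < \<bar>y\<bar>}"
      by (intro open_Collect_less continuous_intros)
    with 4 show ?thesis
      by (intro local[of "{y. r < \<bar>y\<bar>}" "\<lambda>_. 1"])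
         (use e in \<open>auto simp: ramp_def ramp'_def field_simps\<close>)
  qed
qed

lemma integral_le_shell:
  fixes q :: "real \<Rightarrow> real"
  assumes q: "q integrable_on {-1..1}" and M: "0 \<le> M" and e: "0 \<le> e" "e \<le> r" "r \<le> 1"
    and le: "\<And>x. x \<in> {-1..1} \<Longrightarrow> q x \<le> (if r - e \<le> \<bar>x\<bar> \<and> \<bar>x\<bar> \<le> r then M else 0)"
  shows "integral {-1..1} q \<le> 2 * e * M"
proof -
  have interval: "((\<lambda>x. if x \<in> {c..d} then M else 0) has_integral M * (d - c)) {-1..1}"
    if "-1 \<le> c" "c \<le> d" "d \<le> 1" for c d
    using that has_integral_const_real[of M c d] by (subst has_integral_restrict) (auto simp: mult.commute)
  define h where "h x = (if x \<in> {r - e..r} then M else 0) + (if x \<in> {-r..-(r - e)} then M else 0)" for x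
  have h: "(h has_integral M * e + M * e) {-1..1}"
    unfolding h_def using interval[of "r - e" r] interval[of "-r" "-(r - e)"] e
    by (intro has_integral_add) auto
  have "integral {-1..1} q \<le> integral {-1..1} h"
  proof (rule integral_le[OF q])
    fix x :: real assume "x \<in> {-1..1}"
    then show "q x \<le> h x"
      using le[of x] M by (cases "x \<ge> 0") (auto simp: h_def split: if_splits)
  qed (use h in blast)
  also have "\<dots> = 2 * e * M"
    using h by (simp add: integral_unique)
  finally show ?thesis .
qed


section \<open>Summability of p-th powers from square-sum bounds\<close>

definition square_sums_bounded :: "real \<Rightarrow> real \<Rightarrow> (nat \<Rightarrow> real) \<Rightarrow> bool" where
  "square_sums_bounded A D c \<longleftrightarrow> (\<forall>I. finite I \<longrightarrow> (\<Sum>n\<in>I. (c n)\<^sup>2) \<le> D)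
     \<and> (\<forall>N I. 0 < N \<longrightarrow> finite I \<longrightarrow> I \<subseteq> {N..} \<longrightarrow> (\<Sum>n\<in>I. (c n)\<^sup>2) \<le> A / real N)"

lemma square_sums_bounded_uminus [simp]:
  "square_sums_bounded A D (\<lambda>n. - c n) \<longleftrightarrow> square_sums_bounded A D c"
  by (simp add: square_sums_bounded_def)

lemma abs_powr_eq_square_powr: "\<bar>c :: real\<bar> powr p = (c\<^sup>2) powr (p / 2)"
proof -
  have "\<bar>c\<bar> powr p = \<bar>c\<bar> powr (2 * (p / 2))" by simp
  also have "\<dots> = (\<bar>c\<bar> powr 2) powr (p / 2)" by (simp only: powr_powr)
  finally show ?thesis by simp
qed

lemma young_powr_half:
  fixes p y L :: real
  assumes p: "1 < p" "p < 2" and y: "0 \<le> y" and L: "0 < L"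
  shows "y powr (p / 2) \<le> p / 2 * L * y + (2 - p) / 2 * L powr (- (p / (2 - p)))"
proof (cases "y = 0")
  case False
  then have y: "0 < y" using y by simp
  define P Q where "P = 2 / p" and "Q = 2 / (2 - p)"
  have PQ: "1 < P" "1 < Q" "1 / P + 1 / Q = 1" using p unfolding P_def Q_def by (auto simp: field_simps)
  have "(L * y) powr (p / 2) * L powr (- (p / 2))
      \<le> ((L * y) powr (p / 2)) powr P / P + (L powr (- (p / 2))) powr Q / Q"
    by (rule Youngs_inequality[OF PQ]) auto
  moreover have "(L * y) powr (p / 2) * L powr (- (p / 2)) = y powr (p / 2)"
    using L y by (simp add: powr_mult powr_minus field_simps)
  moreover have "((L * y) powr (p / 2)) powr P / P = p / 2 * L * y"
    using L y p unfolding P_def by (simp add: powr_powr)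
  moreover have "(L powr (- (p / 2))) powr Q / Q = (2 - p) / 2 * L powr (- (p / (2 - p)))"
    using p unfolding Q_def by (simp add: powr_powr field_simps)
  ultimately show ?thesis by simp
qed (use p in simp)

lemma min_le_powr_mult_powr:
  fixes x y t :: real
  assumes "0 \<le> x" "0 \<le> y" "0 \<le> t" "t \<le> 1"
  shows "min x y \<le> x powr t * y powr (1 - t)"
proof -
  have "min x y = (min x y) powr t * (min x y) powr (1 - t)"
    using assms by (cases "min x y = 0") (simp_all add: powr_add[symmetric])
  also have "\<dots> \<le> x powr t * y powr (1 - t)"
    using assms by (intro mult_mono powr_mono2) auto
  finally show ?thesis .
qed

text \<open>For p < 2: with weights h n, roughly n powr (1/p), Abel summation turns the tail bounds into a
  bound on the weighted sum of squares, and Young's inequality splits each term into a weighted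
  square and a summable power of n.\<close>

lemma sum_abs_powr_le_of_square_tails_lt2:
  assumes p: "1 < p" "p < 2" and A: "0 \<le> A"
  obtains K \<gamma> where "0 < \<gamma>" "0 \<le> K"
    "\<And>c D M. 0 < D \<Longrightarrow> D \<le> 1 \<Longrightarrow> square_sums_bounded A D c \<Longrightarrow>
      (\<Sum>n\<in>{1..M}. \<bar>c n\<bar> powr p) \<le> K * D powr \<gamma>"
proof -
  define s \<theta> q where "s = 1 / p" and "\<theta> = (1 - 1 / p) / 2" and "q = p / (2 - p)"
  define e1 e2 where "e1 = s - 2 + \<theta>" and "e2 = - (s * q)"
  define Z1 Z2 where "Z1 = (\<Sum>N. real N powr e1)" and "Z2 = (\<Sum>n. real n powr e2)"
  have \<theta>: "0 < \<theta>" "\<theta> \<le> 1" and q: "0 < q" using p by (auto simp: \<theta>_def q_def field_simps)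
  have sum1: "summable (\<lambda>N. real N powr e1)" and sum2: "summable (\<lambda>n. real n powr e2)"
    using p by (simp_all add: summable_real_powr_iff e1_def e2_def s_def \<theta>_def q_def field_simps)
  have Z: "0 \<le> Z1" "0 \<le> Z2"
    unfolding Z1_def Z2_def by (intro suminf_nonneg sum1 sum2; simp)+
  define \<gamma> where "\<gamma> = min (\<theta> / 2) (\<theta> * q / 2)"
  define K where "K = p / 2 * A powr (1 - \<theta>) * Z1 + (2 - p) / 2 * Z2"
  show ?thesis
  proof (rule that[of \<gamma> K])
    show "0 < \<gamma>" using \<theta> q by (simp add: \<gamma>_def)
    show "0 \<le> K" using p Z by (simp add: K_def)
    fix c :: "nat \<Rightarrow> real" and D :: real and M :: nat
    assume D: "0 < D" "D \<le> 1" and c: "square_sums_bounded A D c"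
    note sq = c[unfolded square_sums_bounded_def, THEN conjunct1, rule_format]
    note tail = c[unfolded square_sums_bounded_def, THEN conjunct2, rule_format]
    define h where "h n = (\<Sum>N\<in>{1..n}. real N powr (s - 1))" for n
    have h_ge: "real n powr s \<le> h n" if "1 \<le> n" for n
    proof -
      have "real n powr s = (\<Sum>N\<in>{1..n}. real n powr (s - 1))"
        using that by (simp add: powr_diff field_simps)
      also have "\<dots> \<le> h n"
        unfolding h_def using p by (intro sum_mono powr_mono2') (auto simp: s_def)
      finally show ?thesis .
    qed
    have weighted: "(\<Sum>n\<in>{1..M}. h n * (c n)\<^sup>2) \<le> D powr \<theta> * A powr (1 - \<theta>) * Z1"
    proof -
      have "(\<Sum>n\<in>{1..M}. h n * (c n)\<^sup>2) = (\<Sum>n\<in>{1..M}. \<Sum>N\<in>{N. N \<in> {1..M} \<and> N \<le> n}. real N powr (s - 1) * (c n)\<^sup>2)"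
        by (intro sum.cong refl) (auto simp: h_def sum_distrib_right intro!: sum.cong)
      also have "\<dots> = (\<Sum>N\<in>{1..M}. real N powr (s - 1) * (\<Sum>n\<in>{N..M}. (c n)\<^sup>2))"
        by (subst sum.swap_restrict) (auto simp: sum_distrib_left intro!: sum.cong)
      also have "\<dots> \<le> (\<Sum>N\<in>{1..M}. D powr \<theta> * A powr (1 - \<theta>) * real N powr e1)"
      proof (rule sum_mono)
        fix N assume N: "N \<in> {1..M}"
        then have "(\<Sum>n\<in>{N..M}. (c n)\<^sup>2) \<le> min D (A / real N)"
          using sq[of "{N..M}"] tail[of N "{N..M}"] by auto
        also have "\<dots> \<le> D powr \<theta> * (A / real N) powr (1 - \<theta>)"
          using D A \<theta> by (intro min_le_powr_mult_powr) auto
        finally have "real N powr (s - 1) * (\<Sum>n\<in>{N..M}. (c n)\<^sup>2)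
            \<le> real N powr (s - 1) * (D powr \<theta> * (A / real N) powr (1 - \<theta>))"
          by (rule mult_left_mono) simp
        also have "\<dots> = D powr \<theta> * A powr (1 - \<theta>) * real N powr e1"
          using N A by (simp add: powr_divide e1_def powr_diff powr_add power2_eq_square field_simps)
        finally show "real N powr (s - 1) * (\<Sum>n\<in>{N..M}. (c n)\<^sup>2) \<le> D powr \<theta> * A powr (1 - \<theta>) * real N powr e1" .
      qed
      also have "\<dots> \<le> D powr \<theta> * A powr (1 - \<theta>) * Z1"
        unfolding sum_distrib_left[symmetric] Z1_def by (intro mult_left_mono sum_le_suminf sum1) auto
      finally show ?thesis .
    qed
    define t where "t = D powr (- (\<theta> / 2))"
    have t: "0 < t" using D by (simp add: t_def)
    have term_le: "\<bar>c n\<bar> powr p \<le> p / 2 * t * (h n * (c n)\<^sup>2) + (2 - p) / 2 * t powr (- q) * real n powr e2"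
      if n: "1 \<le> n" for n
    proof -
      have hn: "0 < h n" using h_ge[OF n] n by (auto intro: less_le_trans[rotated])
      have "\<bar>c n\<bar> powr p \<le> p / 2 * (t * h n) * (c n)\<^sup>2 + (2 - p) / 2 * (t * h n) powr (- q)"
        unfolding abs_powr_eq_square_powr[of "c n"] q_def using p t hn by (intro young_powr_half) auto
      moreover have "(t * h n) powr (- q) \<le> t powr (- q) * real n powr e2"
      proof -
        have "h n powr (- q) \<le> (real n powr s) powr (- q)"
          using h_ge[OF n] q n by (intro powr_mono2') auto
        then show ?thesis
          using t hn by (simp add: powr_mult powr_powr e2_def mult_left_mono)
      qed
      then have "(2 - p) / 2 * (t * h n) powr (- q) \<le> (2 - p) / 2 * t powr (- q) * real n powr e2"
        using p by (simp add: mult.assoc mult_left_mono)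
      ultimately show ?thesis
        by (simp add: mult.assoc)
    qed
    have "(\<Sum>n\<in>{1..M}. \<bar>c n\<bar> powr p)
        \<le> p / 2 * t * (\<Sum>n\<in>{1..M}. h n * (c n)\<^sup>2) + (2 - p) / 2 * t powr (- q) * (\<Sum>n\<in>{1..M}. real n powr e2)"
    proof -
      have "(\<Sum>n\<in>{1..M}. \<bar>c n\<bar> powr p)
          \<le> (\<Sum>n\<in>{1..M}. p / 2 * t * (h n * (c n)\<^sup>2) + (2 - p) / 2 * t powr (- q) * real n powr e2)"
        using term_le by (intro sum_mono) auto
      then show ?thesis by (simp add: sum.distrib sum_distrib_left)
    qed
    also have "\<dots> \<le> p / 2 * t * (D powr \<theta> * A powr (1 - \<theta>) * Z1) + (2 - p) / 2 * t powr (- q) * Z2"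
      using p t weighted by (intro add_mono mult_left_mono sum_le_suminf[OF sum2, unfolded Z2_def[symmetric]]) (auto simp: Z2_def)
    also have "\<dots> = p / 2 * A powr (1 - \<theta>) * Z1 * (t * D powr \<theta>) + (2 - p) / 2 * Z2 * t powr (- q)"
      by (simp add: ac_simps)
    also have "\<dots> = p / 2 * A powr (1 - \<theta>) * Z1 * D powr (\<theta> / 2) + (2 - p) / 2 * Z2 * D powr (\<theta> * q / 2)"
    proof -
      have "t * D powr \<theta> = D powr (\<theta> / 2)"
        using D unfolding t_def by (simp add: powr_add[symmetric])
      moreover have "t powr (- q) = D powr (\<theta> * q / 2)"
        unfolding t_def by (simp add: powr_powr)
      ultimately show ?thesis by simp
    qed
    also have "\<dots> \<le> K * D powr \<gamma>"
      unfolding K_def distrib_right using p A Z D \<theta> q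
      by (intro add_mono mult_left_mono powr_mono') (auto simp: \<gamma>_def)
    finally show "(\<Sum>n\<in>{1..M}. \<bar>c n\<bar> powr p) \<le> K * D powr \<gamma>" .
  qed
qed

lemma suminf_abs_powr_le_of_square_tails:
  assumes p: "1 < p" and A: "0 \<le> A"
  obtains K \<gamma> where "0 < \<gamma>"
    "\<And>c D. 0 < D \<Longrightarrow> D \<le> 1 \<Longrightarrow> square_sums_bounded A D c \<Longrightarrow>
      summable (\<lambda>n. \<bar>c n\<bar> powr p) \<and> (\<Sum>n. \<bar>c n\<bar> powr p) \<le> K * D powr \<gamma>"
proof -
  have partial_sums:
    "summable (\<lambda>n. \<bar>c n\<bar> powr p) \<and> (\<Sum>n. \<bar>c n\<bar> powr p) \<le> B"
    if "\<And>M. (\<Sum>n<M. \<bar>c n\<bar> powr p) \<le> B" for c :: "nat \<Rightarrow> real" and B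
    using summableI_nonneg_bounded[of "\<lambda>n. \<bar>c n\<bar> powr p", OF _ that]
    by (auto intro: suminf_le_const that)
  show ?thesis
  proof (cases "2 \<le> p")
    case True
    show ?thesis
    proof (rule that[of "p / 2" 1])
      fix c :: "nat \<Rightarrow> real" and D :: real
      assume D: "0 < D" and c: "square_sums_bounded A D c"
      note sq = c[unfolded square_sums_bounded_def, THEN conjunct1, rule_format]
      have e: "p / 2 = 1 + (p - 2) / 2" by (simp add: field_simps)
      have "\<bar>c n\<bar> powr p \<le> (c n)\<^sup>2 * D powr ((p - 2) / 2)" for n
      proof -
        have "\<bar>c n\<bar> powr p = (c n)\<^sup>2 * ((c n)\<^sup>2) powr ((p - 2) / 2)"
          unfolding abs_powr_eq_square_powr by (subst e) (simp only: powr_add, simp)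
        also have "\<dots> \<le> (c n)\<^sup>2 * D powr ((p - 2) / 2)"
          using True sq[of "{n}"] by (intro mult_left_mono powr_mono2) auto
        finally show ?thesis .
      qed
      then have "(\<Sum>n<M. \<bar>c n\<bar> powr p) \<le> (\<Sum>n<M. (c n)\<^sup>2) * D powr ((p - 2) / 2)" for M
        by (simp add: sum_distrib_right sum_mono)
      also have "\<dots> M \<le> D * D powr ((p - 2) / 2)" for M
        using sq[of "{..<M}"] by (intro mult_right_mono) auto
      also have "D * D powr ((p - 2) / 2) = 1 * D powr (p / 2)"
        using D by (subst e) (simp add: powr_add)
      finally show "summable (\<lambda>n. \<bar>c n\<bar> powr p) \<and> (\<Sum>n. \<bar>c n\<bar> powr p) \<le> 1 * D powr (p / 2)"
        by (rule partial_sums)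
    qed (use p in simp)
  next
    case False
    then have p2: "p < 2" by simp
    obtain K \<gamma> where \<gamma>: "0 < \<gamma>" and K: "0 \<le> K"
      and bound: "\<And>c D M. 0 < D \<Longrightarrow> D \<le> 1 \<Longrightarrow> square_sums_bounded A D c \<Longrightarrow>
        (\<Sum>n\<in>{1..M}. \<bar>c n\<bar> powr p) \<le> K * D powr \<gamma>"
      by (rule sum_abs_powr_le_of_square_tails_lt2[OF p p2 A]) (rule that)
    show ?thesis
    proof (rule that[of "min \<gamma> (p / 2)" "1 + K"])
      fix c :: "nat \<Rightarrow> real" and D :: real
      assume D: "0 < D" "D \<le> 1" and c: "square_sums_bounded A D c"
      note sq = c[unfolded square_sums_bounded_def, THEN conjunct1, rule_format]
      have "(\<Sum>n<M. \<bar>c n\<bar> powr p) \<le> (1 + K) * D powr min \<gamma> (p / 2)" for M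
      proof -
        have "(\<Sum>n<M. \<bar>c n\<bar> powr p) \<le> (\<Sum>n\<in>insert 0 {1..M}. \<bar>c n\<bar> powr p)"
          by (intro sum_mono2) auto
        also have "\<dots> = \<bar>c 0\<bar> powr p + (\<Sum>n\<in>{1..M}. \<bar>c n\<bar> powr p)"
          by (simp add: sum.insert)
        also have "\<dots> \<le> D powr (p / 2) + K * D powr \<gamma>"
          unfolding abs_powr_eq_square_powr[of "c 0"]
          using sq[of "{0}"] p bound[OF D c] by (intro add_mono powr_mono2) auto
        also have "\<dots> \<le> D powr min \<gamma> (p / 2) + K * D powr min \<gamma> (p / 2)"
          using D K by (intro add_mono mult_left_mono powr_mono') auto
        finally show ?thesis by (simp add: distrib_right)
      qed
      then show "summable (\<lambda>n. \<bar>c n\<bar> powr p) \<and> (\<Sum>n. \<bar>c n\<bar> powr p) \<le> (1 + K) * D powr min \<gamma> (p / 2)"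
        by (rule partial_sums)
    qed (use p \<gamma> in simp)
  qed
qed

theorem lp_norm_tendsto_zero_of_square_tails:
  fixes c :: "'a \<Rightarrow> nat \<Rightarrow> real" and D :: "'a \<Rightarrow> real"
  assumes p: "1 < p" and A: "0 \<le> A" and D: "(D \<longlongrightarrow> 0) F" "\<forall>\<^sub>F x in F. 0 < D x"
    and c: "\<forall>\<^sub>F x in F. square_sums_bounded A (D x) (c x)"
  shows "\<forall>\<^sub>F x in F. summable (\<lambda>n. \<bar>c x n\<bar> powr p)"
    and "((\<lambda>x. lp_norm p (c x)) \<longlongrightarrow> 0) F"
proof -
  obtain K \<gamma> where \<gamma>: "0 < \<gamma>"
    and bound: "\<And>c D. 0 < D \<Longrightarrow> D \<le> 1 \<Longrightarrow> square_sums_bounded A D c \<Longrightarrow>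
      summable (\<lambda>n. \<bar>c n\<bar> powr p) \<and> (\<Sum>n. \<bar>c n\<bar> powr p) \<le> K * D powr \<gamma>"
    by (rule suminf_abs_powr_le_of_square_tails[OF p A]) (rule that)
  have "\<forall>\<^sub>F x in F. D x < 1"
    using D(1) by (rule order_tendstoD) simp
  with D(2) c have ev: "\<forall>\<^sub>F x in F. summable (\<lambda>n. \<bar>c x n\<bar> powr p) \<and> (\<Sum>n. \<bar>c x n\<bar> powr p) \<le> K * D x powr \<gamma>"
    by eventually_elim (rule bound, auto)
  then show "\<forall>\<^sub>F x in F. summable (\<lambda>n. \<bar>c x n\<bar> powr p)"
    by eventually_elim simp
  have nonneg: "\<forall>\<^sub>F x in F. 0 \<le> (\<Sum>n. \<bar>c x n\<bar> powr p)"
    using ev by eventually_elim (simp add: suminf_nonneg)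
  have "\<forall>\<^sub>F x in F. 0 \<le> D x"
    using D(2) by eventually_elim simp
  then have "((\<lambda>x. D x powr \<gamma>) \<longlongrightarrow> 0) F"
    using \<gamma> by (intro tendsto_zero_powrI[OF D(1) tendsto_const])
  then have lim: "((\<lambda>x. K * D x powr \<gamma>) \<longlongrightarrow> 0) F"
    by (rule tendsto_mult_right_zero)
  have le: "\<forall>\<^sub>F x in F. (\<Sum>n. \<bar>c x n\<bar> powr p) \<le> K * D x powr \<gamma>"
    using ev by eventually_elim simp
  have "((\<lambda>x. \<Sum>n. \<bar>c x n\<bar> powr p) \<longlongrightarrow> 0) F"
    by (rule tendsto_sandwich[OF nonneg le tendsto_const lim])
  then show "((\<lambda>x. lp_norm p (c x)) \<longlongrightarrow> 0) F"
    unfolding lp_norm_def by (rule tendsto_zero_powrI[OF _ tendsto_const nonneg]) (use p in simp)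
qed

section \<open>Coefficients of truncated functions\<close>

locale jacobi_half = jacobi +
  assumes a_ge: "-1/2 \<le> a" and b_ge: "-1/2 \<le> b"
begin

lemma jacobi_eigenvalue_ge_square: "(real n)\<^sup>2 \<le> jacobi_eigenvalue a b n"
  using a_ge b_ge unfolding jacobi_eigenvalue_def power2_eq_square by (intro mult_left_mono) auto

end

lemma bounded_measurable_on_ramp': "0 < e \<Longrightarrow> bounded_measurable_on S (ramp' r e)"
  by (rule bounded_measurable_on_borel)
     (auto simp: bounded_real intro!: exI[of _ "1 / e"] abs_ramp'_le[THEN order_trans])

lemma powr_minus_half: "0 < t \<Longrightarrow> t powr (-1/2) = inverse (sqrt t)"
  by (simp add: powr_minus powr_half_sqrt[symmetric])

lemma compact_continuous_abs_bound:
  fixes h :: "real \<Rightarrow> real"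
  assumes "compact S" "continuous_on S h"
  obtains B where "0 < B" "\<And>x. x \<in> S \<Longrightarrow> \<bar>h x\<bar> \<le> B"
proof -
  obtain B where "\<forall>x\<in>S. \<bar>h x\<bar> \<le> B"
    using compact_imp_bounded[OF compact_continuous_image[OF assms(2,1)]] unfolding bounded_real by auto
  then show ?thesis
    by (intro that[of "max B 1"]) (auto intro: le_max_iff_disj[THEN iffD2])
qed

lemma bounded_measurable_on_truncate:
  assumes "bounded_measurable_on S F"
  shows "bounded_measurable_on S (\<lambda>x. if \<bar>x\<bar> \<le> r then 0 else F x)"
proof -
  have "bounded_measurable_on S (\<lambda>x. (if \<bar>x\<bar> \<le> r then 0 else 1) * F x)"
    by (intro bounded_measurable_on_mult bounded_measurable_on_borel assms)
       (auto simp: bounded_real intro: exI[of _ 1])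
  moreover have "(\<lambda>x. (if \<bar>x\<bar> \<le> r then 0 else 1) * F x) = (\<lambda>x. if \<bar>x\<bar> \<le> r then 0 else F x)"
    by (simp add: fun_eq_iff)
  ultimately show ?thesis by simp
qed

locale jacobi_truncation = jacobi_half +
  fixes F F' :: "real \<Rightarrow> real"
  assumes F_cont: "continuous_on {-1..1} F" and F'_cont: "continuous_on {-1..1} F'"
    and F_deriv: "\<And>x. x \<in> {-1<..<1} \<Longrightarrow> (F has_real_derivative F' x) (at x)"
begin

definition outer :: "real \<Rightarrow> real \<Rightarrow> real" where
  "outer r x = (if \<bar>x\<bar> \<le> r then 0 else F x)"

definition outer_coeff :: "real \<Rightarrow> nat \<Rightarrow> real" where
  "outer_coeff r n = inner_w (outer r) (jacobi_p a b n)"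

definition smooth :: "real \<Rightarrow> real \<Rightarrow> real \<Rightarrow> real" where
  "smooth r e x = F x * ramp r e x"

definition smooth' :: "real \<Rightarrow> real \<Rightarrow> real \<Rightarrow> real" where
  "smooth' r e x = F' x * ramp r e x + F x * ramp' r e x"

lemma bounded_measurable_on_outer: "bounded_measurable_on {-1..1} (outer r)"
  unfolding outer_def[abs_def]
  by (intro bounded_measurable_on_truncate bounded_measurable_on_continuous[OF compact_Icc F_cont])

lemma continuous_on_smooth: "0 < e \<Longrightarrow> continuous_on {-1..1} (smooth r e)"
  unfolding smooth_def[abs_def] by (intro continuous_intros F_cont continuous_on_ramp)

lemma smooth_has_derivative:
  assumes "0 < e" "e \<le> r" "x \<in> {-1<..<1} - {-r, -(r - e), 0, r - e, r}"
  shows "(smooth r e has_real_derivative smooth' r e x) (at x)"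
  unfolding smooth_def[abs_def] smooth'_def using assms
  by (auto intro!: derivative_eq_intros F_deriv ramp_has_derivative)

lemma bounded_measurable_on_smooth': "0 < e \<Longrightarrow> bounded_measurable_on {-1..1} (smooth' r e)"
  unfolding smooth'_def[abs_def]
  by (intro bounded_measurable_on_add bounded_measurable_on_mult bounded_measurable_on_ramp'
      bounded_measurable_on_continuous[OF compact_Icc] continuous_on_ramp F_cont F'_cont)

lemma outer_sqnorm_le:
  obtains C where "0 \<le> C" "\<And>r. 0 \<le> r \<Longrightarrow> r \<le> 1 \<Longrightarrow> inner_w (outer r) (outer r) \<le> C * sqrt (1 - r)"
proof -
  obtain B where B: "0 < B" "\<And>x. x \<in> {-1..1} \<Longrightarrow> \<bar>F x\<bar> \<le> B"
    by (rule compact_continuous_abs_bound[OF compact_Icc F_cont]) (rule that)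
  define K where "K = B\<^sup>2 * (2 powr \<bar>a\<bar> + 2 powr \<bar>b\<bar>)"
  have K: "0 \<le> K" by (simp add: K_def)
  show ?thesis
  proof (rule that[of "4 * K"])
    fix r :: real assume r: "0 \<le> r" "r \<le> 1"
    define h where "h x = (if x \<in> {r..1} then K * (1 - x) powr (-1/2) else 0)
        + (if x \<in> {-1..-r} then K * (1 + x) powr (-1/2) else 0)" for x
    have right: "((\<lambda>x. if x \<in> {r..1} then K * (1 - x) powr (-1/2) else 0) has_integral K * (2 * sqrt (1 - r))) {-1..1}"
      using r has_integral_one_minus_powr[of "-1/2" r]
      by (subst has_integral_restrict) (auto intro!: has_integral_mult_right simp: powr_half_sqrt mult.commute)
    have left: "((\<lambda>x. if x \<in> {-1..-r} then K * (1 + x) powr (-1/2) else 0) has_integral K * (2 * sqrt (1 - r))) {-1..1}"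
      using r has_integral_one_plus_powr[of "-1/2" r]
      by (subst has_integral_restrict) (auto intro!: has_integral_mult_right simp: powr_half_sqrt mult.commute)
    have h: "(h has_integral 4 * K * sqrt (1 - r)) {-1..1}"
      using has_integral_add[OF right left] by (simp add: h_def[abs_def] mult.assoc)
    have "outer r x * outer r x * jacobi_weight a b x \<le> h x" if x: "x \<in> {-1..1}" for x
    proof (cases "\<bar>x\<bar> \<le> r")
      case True
      then show ?thesis
        using K by (simp add: outer_def h_def)
    next
      case False
      have "\<bar>F x\<bar> * \<bar>F x\<bar> \<le> B * B"
        using B(2)[OF x] by (intro mult_mono) auto
      then have "F x * F x \<le> B\<^sup>2"
        by (simp add: power2_eq_square)
      moreover have "jacobi_weight a b x \<le> (2 powr \<bar>a\<bar> + 2 powr \<bar>b\<bar>) * (1 - \<bar>x\<bar>) powr (-1/2)"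
        using x a_ge b_ge by (intro jacobi_weight_le) auto
      ultimately have "(F x * F x) * jacobi_weight a b x \<le> B\<^sup>2 * ((2 powr \<bar>a\<bar> + 2 powr \<bar>b\<bar>) * (1 - \<bar>x\<bar>) powr (-1/2))"
        by (intro mult_mono) (auto simp: jacobi_weight_nonneg)
      then have "outer r x * outer r x * jacobi_weight a b x \<le> K * (1 - \<bar>x\<bar>) powr (-1/2)"
        using False by (simp add: outer_def K_def mult.assoc)
      also have "\<dots> = h x"
        using False x r by (cases "x \<ge> 0") (simp_all add: h_def)
      finally show ?thesis .
    qed
    then have "inner_w (outer r) (outer r) \<le> integral {-1..1} h"
      unfolding weighted_inner_def using h
      by (intro integral_le inner_w_integrable bounded_measurable_on_outer) auto
    then show "inner_w (outer r) (outer r) \<le> 4 * K * sqrt (1 - r)"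
      using h by (simp add: integral_unique)
  qed (use K in simp)
qed

lemma outer_minus_smooth_sqnorm_le:
  obtains C where "0 \<le> C"
    "\<And>r e. 1/2 \<le> r \<Longrightarrow> r < 1 \<Longrightarrow> 0 < e \<Longrightarrow> e \<le> 1 - r \<Longrightarrow>
       inner_w (\<lambda>x. outer r x - smooth r e x) (\<lambda>x. outer r x - smooth r e x) \<le> C * e / sqrt (1 - r)"
proof -
  obtain B where B: "0 < B" "\<And>x. x \<in> {-1..1} \<Longrightarrow> \<bar>F x\<bar> \<le> B"
    by (rule compact_continuous_abs_bound[OF compact_Icc F_cont]) (rule that)
  define K where "K = B\<^sup>2 * (2 powr \<bar>a\<bar> + 2 powr \<bar>b\<bar>)"
  have K: "0 \<le> K" by (simp add: K_def)
  show ?thesis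
  proof (rule that[of "2 * K"])
    fix r e :: real assume r: "1/2 \<le> r" "r < 1" and e: "0 < e" "e \<le> 1 - r"
    define d where "d x = outer r x - smooth r e x" for x
    have d_bm: "bounded_measurable_on {-1..1} d"
      unfolding d_def[abs_def]
      by (intro bounded_measurable_on_diff bounded_measurable_on_outer bounded_measurable_on_continuous
          continuous_on_smooth e) simp
    have "integral {-1..1} (\<lambda>x. d x * d x * jacobi_weight a b x) \<le> 2 * e * (K / sqrt (1 - r))"
    proof (rule integral_le_shell)
      fix x :: real assume x: "x \<in> {-1..1}"
      show "d x * d x * jacobi_weight a b x \<le> (if r - e \<le> \<bar>x\<bar> \<and> \<bar>x\<bar> \<le> r then K / sqrt (1 - r) else 0)"
      proof (cases "r - e \<le> \<bar>x\<bar> \<and> \<bar>x\<bar> \<le> r")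
        case True
        have "\<bar>d x\<bar> = \<bar>F x\<bar> * ramp r e x"
          using True ramp_bounds[of r e x] by (simp add: d_def outer_def smooth_def abs_mult)
        also have "\<dots> \<le> B"
          using B(2)[OF x] ramp_bounds[of r e x] mult_left_le[of "ramp r e x" "\<bar>F x\<bar>"] by simp
        finally have "\<bar>d x\<bar> \<le> B" .
        then have d_sq: "d x * d x \<le> B\<^sup>2"
          using power_mono[OF _ abs_ge_zero, of "d x" B 2] by (simp add: power2_eq_square)
        have "jacobi_weight a b x \<le> (2 powr \<bar>a\<bar> + 2 powr \<bar>b\<bar>) * (1 - \<bar>x\<bar>) powr (-1/2)"
          using x a_ge b_ge by (intro jacobi_weight_le) auto
        also have "\<dots> \<le> (2 powr \<bar>a\<bar> + 2 powr \<bar>b\<bar>) * (1 - r) powr (-1/2)"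
          using True r by (intro mult_left_mono powr_mono2') auto
        finally have "d x * d x * jacobi_weight a b x \<le> B\<^sup>2 * ((2 powr \<bar>a\<bar> + 2 powr \<bar>b\<bar>) * (1 - r) powr (-1/2))"
          by (rule mult_mono[OF d_sq _ zero_le_power2 jacobi_weight_nonneg])
        also have "\<dots> = K / sqrt (1 - r)"
        proof -
          have "(1 - r) powr (-1/2) = inverse (sqrt (1 - r))"
            by (rule powr_minus_half) (use r in simp)
          then show ?thesis
            unfolding K_def by (simp add: field_simps)
        qed
        finally show ?thesis
          using True by simp
      next
        case False
        then have "d x = 0"
          using ramp_outside[OF e(1) False] by (simp add: d_def outer_def smooth_def)
        with False show ?thesis by auto
      qed
    qed (use r e K d_bm in \<open>auto intro: inner_w_integrable\<close>)
    then show "inner_w (\<lambda>x. outer r x - smooth r e x) (\<lambda>x. outer r x - smooth r e x) \<le> 2 * K * e / sqrt (1 - r)"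
      by (simp add: weighted_inner_def d_def mult.commute mult.left_commute)
  qed (use K in simp)
qed

lemma smooth'_sqnorm_le:
  obtains C where "0 \<le> C"
    "\<And>r e. 1/2 \<le> r \<Longrightarrow> r < 1 \<Longrightarrow> 0 < e \<Longrightarrow> e \<le> 1 - r \<Longrightarrow>
       inner_w1 (smooth' r e) (smooth' r e) \<le> C * (1 + sqrt (1 - r) / e)"
proof -
  obtain B where B: "0 < B" "\<And>x. x \<in> {-1..1} \<Longrightarrow> \<bar>F x\<bar> \<le> B"
    by (rule compact_continuous_abs_bound[OF compact_Icc F_cont]) (rule that)
  obtain B' where B': "0 < B'" "\<And>x. x \<in> {-1..1} \<Longrightarrow> \<bar>F' x\<bar> \<le> B'"
    by (rule compact_continuous_abs_bound[OF compact_Icc F'_cont]) (rule that)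
  define W1 where "W1 = jacobi_weight (a + 1) (b + 1)"
  define M where "M = integral {-1..1} W1"
  define K where "K = 2 powr \<bar>a + 1\<bar> + 2 powr \<bar>b + 1\<bar>"
  have K: "0 \<le> K" by (simp add: K_def)
  have W1: "(W1 has_integral M) {-1..1}"
    unfolding M_def using weight_absolutely_integrable(2)
    by (intro integrable_integral) (simp add: W1_def absolutely_integrable_on_def)
  have M: "0 \<le> M"
    using W1 by (intro has_integral_nonneg[OF W1]) (simp add: W1_def jacobi_weight_nonneg)
  define C where "C = 2 * B'\<^sup>2 * M + 4 * sqrt 2 * B\<^sup>2 * K"
  have C: "0 \<le> C" using M K by (simp add: C_def)
  show ?thesis
  proof (rule that[OF C])
    fix r e :: real assume r: "1/2 \<le> r" "r < 1" and e: "0 < e" "e \<le> 1 - r"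
    define v where "v x = F x * ramp' r e x" for x
    define q where "q x = 2 * v x * v x * W1 x" for x
    have v_bm: "bounded_measurable_on {-1..1} v"
      unfolding v_def[abs_def]
      by (intro bounded_measurable_on_mult bounded_measurable_on_continuous[OF compact_Icc F_cont]
          bounded_measurable_on_ramp' e)
    have q_int: "q integrable_on {-1..1}"
      unfolding q_def[abs_def] mult.assoc[symmetric] W1_def
      by (intro inner_w1_integrable bounded_measurable_on_cmult v_bm)
    have "integral {-1..1} q \<le> 2 * e * (2 * B\<^sup>2 / e\<^sup>2 * (K * sqrt (2 * (1 - r))))"
    proof (rule integral_le_shell[OF q_int])
      fix x :: real assume x: "x \<in> {-1..1}"
      show "q x \<le> (if r - e \<le> \<bar>x\<bar> \<and> \<bar>x\<bar> \<le> r then 2 * B\<^sup>2 / e\<^sup>2 * (K * sqrt (2 * (1 - r))) else 0)"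
      proof (cases "r - e \<le> \<bar>x\<bar> \<and> \<bar>x\<bar> \<le> r")
        case True
        have "\<bar>v x\<bar> \<le> B * (1 / e)"
          unfolding v_def abs_mult using B(2)[OF x] abs_ramp'_le[OF e(1), of r x] True
          by (intro mult_mono) auto
        then have v_sq: "v x * v x \<le> B\<^sup>2 / e\<^sup>2"
          using power_mono[OF _ abs_ge_zero, of "v x" "B * (1 / e)" 2] by (simp add: power2_eq_square)
        have "W1 x \<le> K * (1 - \<bar>x\<bar>) powr (1/2)"
          unfolding W1_def K_def using x a_ge b_ge by (intro jacobi_weight_le) auto
        also have "\<dots> \<le> K * sqrt (2 * (1 - r))"
          using True e x by (auto simp: K_def powr_half_sqrt intro!: mult_left_mono)
        finally have "v x * v x * W1 x \<le> B\<^sup>2 / e\<^sup>2 * (K * sqrt (2 * (1 - r)))"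
          by (rule mult_mono[OF v_sq]) (auto simp: W1_def jacobi_weight_nonneg)
        then show ?thesis
          using True by (simp add: q_def mult.assoc)
      next
        case False
        then have "v x = 0"
          by (auto simp: v_def ramp'_def)
        with False show ?thesis by (auto simp: q_def)
      qed
    qed (use r e K in \<open>auto intro!: divide_nonneg_nonneg mult_nonneg_nonneg\<close>)
    also have "\<dots> = 4 * sqrt 2 * B\<^sup>2 * K * (sqrt (1 - r) / e)"
      unfolding real_sqrt_mult using e by (simp add: power2_eq_square field_simps)
    finally have q_le: "integral {-1..1} q \<le> 4 * sqrt 2 * B\<^sup>2 * K * (sqrt (1 - r) / e)" .
    have "inner_w1 (smooth' r e) (smooth' r e) \<le> integral {-1..1} (\<lambda>x. 2 * B'\<^sup>2 * W1 x + q x)"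
      unfolding weighted_inner_def W1_def[symmetric]
    proof (rule integral_le)
      show "(\<lambda>x. smooth' r e x * smooth' r e x * W1 x) integrable_on {-1..1}"
        unfolding W1_def by (intro inner_w1_integrable bounded_measurable_on_smooth' e)
      show "(\<lambda>x. 2 * B'\<^sup>2 * W1 x + q x) integrable_on {-1..1}"
        using has_integral_mult_right[OF W1, of "2 * B'\<^sup>2"] q_int by (intro integrable_add) auto
      fix x :: real assume x: "x \<in> {-1..1}"
      define u where "u = F' x * ramp r e x"
      have "\<bar>u\<bar> \<le> B' * 1"
        unfolding u_def abs_mult using B'(2)[OF x] ramp_bounds[of r e x] by (intro mult_mono) auto
      then have "u * u \<le> B'\<^sup>2"
        using power_mono[OF _ abs_ge_zero, of u B' 2] by (simp add: power2_eq_square)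
      moreover have "smooth' r e x * smooth' r e x \<le> 2 * (u * u) + 2 * (v x * v x)"
        using sum_squares_ge_zero[of "u - v x" 0] by (simp add: smooth'_def u_def v_def algebra_simps power2_eq_square)
      ultimately have "smooth' r e x * smooth' r e x \<le> 2 * B'\<^sup>2 + 2 * (v x * v x)"
        by linarith
      then have "smooth' r e x * smooth' r e x * W1 x \<le> (2 * B'\<^sup>2 + 2 * (v x * v x)) * W1 x"
        by (rule mult_right_mono) (simp add: W1_def jacobi_weight_nonneg)
      then show "smooth' r e x * smooth' r e x * W1 x \<le> 2 * B'\<^sup>2 * W1 x + q x"
        by (simp add: q_def distrib_right)
    qed
    also have "\<dots> = 2 * B'\<^sup>2 * M + integral {-1..1} q"
      using has_integral_add[OF has_integral_mult_right[OF W1, of "2 * B'\<^sup>2"] integrable_integral[OF q_int]]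
      by (rule integral_unique)
    also have "\<dots> \<le> C * (1 + sqrt (1 - r) / e)"
    proof -
      have "C * (1 + sqrt (1 - r) / e) = 2 * B'\<^sup>2 * M + 4 * sqrt 2 * B\<^sup>2 * K
          + 2 * B'\<^sup>2 * M * (sqrt (1 - r) / e) + 4 * sqrt 2 * B\<^sup>2 * K * (sqrt (1 - r) / e)"
        by (simp add: C_def algebra_simps)
      moreover have "0 \<le> 4 * sqrt 2 * B\<^sup>2 * K" "0 \<le> 2 * B'\<^sup>2 * M * (sqrt (1 - r) / e)"
        using K M e r by auto
      ultimately show ?thesis using q_le by linarith
    qed
    finally show "inner_w1 (smooth' r e) (smooth' r e) \<le> C * (1 + sqrt (1 - r) / e)" .
  qed
qed

text \<open>Below the scale sqrt (1 - r) / N the truncation is too thin to matter; above it, F is split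
  into its smoothing across a ramp of that width, whose high coefficients are controlled by the
  derivative, and a remainder that is small in norm.\<close>

lemma outer_coeff_tail_le:
  obtains A where "0 \<le> A" "\<And>r N I. 1/2 \<le> r \<Longrightarrow> r < 1 \<Longrightarrow> 0 < N \<Longrightarrow> finite I \<Longrightarrow> I \<subseteq> {N..} \<Longrightarrow>
    (\<Sum>n\<in>I. (outer_coeff r n)\<^sup>2) \<le> A / real N"
proof -
  obtain C0 where C0: "0 \<le> C0" "\<And>r. 0 \<le> r \<Longrightarrow> r \<le> 1 \<Longrightarrow> inner_w (outer r) (outer r) \<le> C0 * sqrt (1 - r)"
    by (rule outer_sqnorm_le) (rule that)
  obtain C1 where C1: "0 \<le> C1" "\<And>r e. 1/2 \<le> r \<Longrightarrow> r < 1 \<Longrightarrow> 0 < e \<Longrightarrow> e \<le> 1 - r \<Longrightarrow>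
      inner_w (\<lambda>x. outer r x - smooth r e x) (\<lambda>x. outer r x - smooth r e x) \<le> C1 * e / sqrt (1 - r)"
    by (rule outer_minus_smooth_sqnorm_le) (rule that)
  obtain C2 where C2: "0 \<le> C2" "\<And>r e. 1/2 \<le> r \<Longrightarrow> r < 1 \<Longrightarrow> 0 < e \<Longrightarrow> e \<le> 1 - r \<Longrightarrow>
      inner_w1 (smooth' r e) (smooth' r e) \<le> C2 * (1 + sqrt (1 - r) / e)"
    by (rule smooth'_sqnorm_le) (rule that)
  show ?thesis
  proof (rule that[of "C0 + 2 * C1 + 4 * C2"])
    show "0 \<le> C0 + 2 * C1 + 4 * C2" using C0(1) C1(1) C2(1) by simp
    fix r :: real and N :: nat and I :: "nat set"
    assume r: "1/2 \<le> r" "r < 1" and N: "0 < N" and I: "finite I" "I \<subseteq> {N..}"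
    have N': "0 < real N" using N by simp
    show "(\<Sum>n\<in>I. (outer_coeff r n)\<^sup>2) \<le> (C0 + 2 * C1 + 4 * C2) / real N"
    proof (cases "sqrt (1 - r) \<le> 1 / real N")
      case True
      have "(\<Sum>n\<in>I. (outer_coeff r n)\<^sup>2) \<le> inner_w (outer r) (outer r)"
        unfolding outer_coeff_def by (rule jacobi_bessel[OF I(1) bounded_measurable_on_outer])
      also have "\<dots> \<le> C0 * (1 / real N)"
        using C0(2)[of r] r mult_left_mono[OF True C0(1)] by simp
      also have "\<dots> \<le> (C0 + 2 * C1 + 4 * C2) / real N"
        using C1(1) C2(1) N' by (simp add: divide_right_mono)
      finally show ?thesis .
    next
      case False
      define e where "e = sqrt (1 - r) / real N"
      have s: "0 < sqrt (1 - r)" using r by simp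
      have e: "0 < e" "e \<le> 1 - r"
      proof -
        show "0 < e" using s N' by (simp add: e_def)
        have "e = sqrt (1 - r) * (1 / real N)" by (simp add: e_def)
        also have "\<dots> \<le> sqrt (1 - r) * sqrt (1 - r)"
          using False s by (intro mult_left_mono) auto
        finally show "e \<le> 1 - r" using r by simp
      qed
      define X Y where "X n = inner_w (\<lambda>x. outer r x - smooth r e x) (jacobi_p a b n)"
        and "Y n = inner_w (smooth r e) (jacobi_p a b n)" for n
      have smooth_bm: "bounded_measurable_on {-1..1} (smooth r e)"
        by (rule bounded_measurable_on_continuous[OF compact_Icc continuous_on_smooth[OF e(1)]])
      have XY: "outer_coeff r n = X n + Y n" for n
        unfolding X_def Y_def outer_coeff_def
        by (simp add: weighted_inner_diff_left[OF _ weight_absolutely_integrable(1) bounded_measurable_on_outer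
            smooth_bm bounded_measurable_on_jacobi_p])
      have X: "(\<Sum>n\<in>I. (X n)\<^sup>2) \<le> C1 / real N"
      proof -
        have "(\<Sum>n\<in>I. (X n)\<^sup>2) \<le> inner_w (\<lambda>x. outer r x - smooth r e x) (\<lambda>x. outer r x - smooth r e x)"
          unfolding X_def
          by (intro jacobi_bessel I bounded_measurable_on_diff bounded_measurable_on_outer smooth_bm)
        also have "\<dots> \<le> C1 * e / sqrt (1 - r)"
          by (rule C1(2)[OF r e])
        also have "\<dots> = C1 / real N"
          using s by (simp add: e_def)
        finally show ?thesis .
      qed
      have Y: "(\<Sum>n\<in>I. (Y n)\<^sup>2) \<le> 2 * C2 / real N"
      proof -
        have "(real N)\<^sup>2 * (\<Sum>n\<in>I. (Y n)\<^sup>2) \<le> (\<Sum>n\<in>I. jacobi_eigenvalue a b n * (Y n)\<^sup>2)"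
          unfolding sum_distrib_left
        proof (rule sum_mono)
          fix n assume "n \<in> I"
          then have "N \<le> n" using I(2) by auto
          then have "(real N)\<^sup>2 \<le> (real n)\<^sup>2" by (simp add: power_mono)
          then have "(real N)\<^sup>2 \<le> jacobi_eigenvalue a b n"
            using jacobi_eigenvalue_ge_square[of n] by linarith
          then show "(real N)\<^sup>2 * (Y n)\<^sup>2 \<le> jacobi_eigenvalue a b n * (Y n)\<^sup>2"
            by (rule mult_right_mono) simp
        qed
        also have "\<dots> \<le> inner_w1 (smooth' r e) (smooth' r e)"
          unfolding Y_def
        proof (rule jacobi_bessel_derivative[of _ "{-r, -(r - e), 0, r - e, r}"])
          show "0 \<notin> I" using I(2) N by auto
          show "\<And>x. x \<in> {-1<..<1} - {-r, -(r - e), 0, r - e, r} \<Longrightarrow>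
              (smooth r e has_real_derivative smooth' r e x) (at x)"
            using e r by (intro smooth_has_derivative) auto
        qed (use I e in \<open>auto intro: continuous_on_smooth bounded_measurable_on_smooth'\<close>)
        also have "\<dots> \<le> C2 * (1 + real N)"
          using C2(2)[OF r e] s N' by (simp add: e_def)
        also have "\<dots> \<le> (real N)\<^sup>2 * (2 * C2 / real N)"
          using C2(1) N' mult_left_mono[of 1 "real N" C2] N by (simp add: power2_eq_square field_simps)
        finally show ?thesis
          by (rule mult_left_le_imp_le) (use N' in simp)
      qed
      have "(\<Sum>n\<in>I. (outer_coeff r n)\<^sup>2) \<le> (\<Sum>n\<in>I. 2 * (X n)\<^sup>2 + 2 * (Y n)\<^sup>2)"
        unfolding XY by (intro sum_mono) (use sum_squares_ge_zero[of "X _ - Y _" 0] in \<open>simp add: power2_eq_square algebra_simps\<close>)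
      also have "\<dots> \<le> 2 * (C1 / real N) + 2 * (2 * C2 / real N)"
        using X Y by (simp add: sum.distrib sum_distrib_left[symmetric])
      also have "\<dots> \<le> (C0 + 2 * C1 + 4 * C2) / real N"
        using C0(1) N' by (simp add: field_simps)
      finally show ?thesis .
    qed
  qed
qed

lemma outer_coeff_square_sums_bounded:
  obtains A C where "0 \<le> A" "0 < C"
    "\<And>r. 1/2 \<le> r \<Longrightarrow> r < 1 \<Longrightarrow> square_sums_bounded A (C * sqrt (1 - r)) (outer_coeff r)"
proof -
  obtain C0 where C0: "0 \<le> C0" "\<And>r. 0 \<le> r \<Longrightarrow> r \<le> 1 \<Longrightarrow> inner_w (outer r) (outer r) \<le> C0 * sqrt (1 - r)"
    by (rule outer_sqnorm_le) (rule that)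
  obtain A where A: "0 \<le> A" "\<And>r N I. 1/2 \<le> r \<Longrightarrow> r < 1 \<Longrightarrow> 0 < N \<Longrightarrow> finite I \<Longrightarrow> I \<subseteq> {N..} \<Longrightarrow>
      (\<Sum>n\<in>I. (outer_coeff r n)\<^sup>2) \<le> A / real N"
    by (rule outer_coeff_tail_le) (rule that)
  show ?thesis
  proof (rule that[OF A(1), of "C0 + 1"])
    fix r :: real assume r: "1/2 \<le> r" "r < 1"
    have "(\<Sum>n\<in>I. (outer_coeff r n)\<^sup>2) \<le> (C0 + 1) * sqrt (1 - r)" if "finite I" for I
    proof -
      have "(\<Sum>n\<in>I. (outer_coeff r n)\<^sup>2) \<le> inner_w (outer r) (outer r)"
        unfolding outer_coeff_def by (rule jacobi_bessel[OF that bounded_measurable_on_outer])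
      also have "\<dots> \<le> C0 * sqrt (1 - r)"
        using C0(2)[of r] r by simp
      also have "\<dots> \<le> (C0 + 1) * sqrt (1 - r)"
        using r by (intro mult_right_mono) auto
      finally show ?thesis .
    qed
    then show "square_sums_bounded A ((C0 + 1) * sqrt (1 - r)) (outer_coeff r)"
      unfolding square_sums_bounded_def using A(2)[OF r] by blast
  qed (use C0 in simp)
qed

end

context jacobi
begin

lemma jacobi_p_has_derivative:
  "(jacobi_p a b n has_real_derivative inverse (sqrt (sqnorm n)) * jacobi_P' a b n x) (at x)"
  unfolding jacobi_p_eq by (intro DERIV_cmult jacobi_P_has_derivative)

text \<open>Since f is a finite combination of orthonormal coefficients, T_r f - f is the coefficient
  sequence of minus the part of the synthesised polynomial outside [-r, r].\<close>

lemma jacobi_T_minus_eq: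
  assumes f: "finite {m. f m \<noteq> 0}" and r: "0 \<le> r" "r \<le> 1"
  defines "F x \<equiv> \<Sum>m | f m \<noteq> 0. f m * jacobi_p a b m x"
  shows "jacobi_T a b r f n - f n = - inner_w (\<lambda>x. if \<bar>x\<bar> \<le> r then 0 else F x) (jacobi_p a b n)"
proof -
  define S where "S = {m. f m \<noteq> 0}"
  have sub: "{-r..r} \<subseteq> {-1..1}" using r by auto
  have p_borel [measurable]: "jacobi_p a b m \<in> borel_measurable borel" for m
    by (rule borel_measurable_continuous_onI[OF continuous_on_jacobi_p])
  have pp_bm: "bounded_measurable_on {-1..1} (\<lambda>x. jacobi_p a b m x * jacobi_p a b n x)" for m
    by (intro bounded_measurable_on_mult bounded_measurable_on_jacobi_p)
  have F_bm: "bounded_measurable_on {-1..1} F"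
    unfolding F_def[abs_def] using f
    by (intro bounded_measurable_on_sum bounded_measurable_on_cmult bounded_measurable_on_jacobi_p)
  have "jacobi_T a b r f n = (\<Sum>m. f m * integral {-r..r} (\<lambda>x. jacobi_p a b m x * jacobi_p a b n x * jacobi_weight a b x))"
    unfolding jacobi_T_def using set_lebesgue_integral_eq_inner_w_integral[OF _ pp_bm sub] by simp
  also have "\<dots> = (\<Sum>m\<in>S. f m * integral {-r..r} (\<lambda>x. jacobi_p a b m x * jacobi_p a b n x * jacobi_weight a b x))"
    by (rule suminf_finite) (use f in \<open>auto simp: S_def\<close>)
  also have "\<dots> = integral {-r..r} (\<lambda>x. F x * jacobi_p a b n x * jacobi_weight a b x)"
  proof -
    have "(\<lambda>x. jacobi_p a b m x * jacobi_p a b n x * jacobi_weight a b x) integrable_on {-r..r}" for m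
      by (rule integrable_on_subinterval[OF inner_w_integrable[OF bounded_measurable_on_jacobi_p
          bounded_measurable_on_jacobi_p] sub])
    then show ?thesis
      unfolding F_def S_def[symmetric] sum_distrib_right integral_mult_right[symmetric]
      by (subst integral_sum) (use f in \<open>auto simp: S_def mult_ac\<close>)
  qed
  also have "\<dots> = integral {-1..1} (\<lambda>x. if x \<in> {-r..r} then F x * jacobi_p a b n x * jacobi_weight a b x else 0)"
    by (subst integral_restrict_Int) (simp only: Int_absorb2[OF sub])
  also have "\<dots> = integral {-1..1} (\<lambda>x. if \<bar>x\<bar> \<le> r then F x * jacobi_p a b n x * jacobi_weight a b x else 0)"
    by (intro integral_cong) auto
  also have "\<dots> = inner_w F (jacobi_p a b n) - inner_w (\<lambda>x. if \<bar>x\<bar> \<le> r then 0 else F x) (jacobi_p a b n)"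
  proof -
    have "integral {-1..1} (\<lambda>x. if \<bar>x\<bar> \<le> r then F x * jacobi_p a b n x * jacobi_weight a b x else 0)
        = integral {-1..1} (\<lambda>x. F x * jacobi_p a b n x * jacobi_weight a b x
            - (if \<bar>x\<bar> \<le> r then 0 else F x) * jacobi_p a b n x * jacobi_weight a b x)"
      by (intro integral_cong) auto
    then show ?thesis
      unfolding weighted_inner_def
      by (simp add: integral_diff inner_w_integrable F_bm bounded_measurable_on_truncate bounded_measurable_on_jacobi_p)
  qed
  also have "inner_w F (jacobi_p a b n) = f n"
  proof -
    have "inner_w F (jacobi_p a b n) = (\<Sum>m\<in>S. f m * inner_w (jacobi_p a b m) (jacobi_p a b n))"
      unfolding F_def[abs_def] S_def[symmetric] using f
      by (subst weighted_inner_sum_left[OF _ weight_absolutely_integrable(1)])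
         (auto simp: S_def weighted_inner_cmult_left intro: bounded_measurable_on_cmult bounded_measurable_on_jacobi_p)
    also have "\<dots> = f n"
      using f by (simp add: S_def jacobi_p_orthonormal if_distrib cong: if_cong)
    finally show ?thesis .
  qed
  finally show ?thesis by simp
qed

end

theorem lemma3p2:
  fixes a b p :: real and f :: "nat \<Rightarrow> real"
  assumes "a \<ge> -1/2" and "b \<ge> -1/2" and "1 < p"
    and "finite {n. f n \<noteq> 0}"
  shows "(\<forall>\<^sub>F r in at_left 1.
            summable (\<lambda>n. \<bar>jacobi_T a b r f n - f n\<bar> powr p))
       \<and> ((\<lambda>r. lp_norm p (\<lambda>n. jacobi_T a b r f n - f n)) \<longlongrightarrow> 0) (at_left 1)"
proof -
  interpret jacobi_half a b
    using assms(1,2) by unfold_locales auto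
  define F F' where "F x = (\<Sum>m | f m \<noteq> 0. f m * jacobi_p a b m x)"
    and "F' x = (\<Sum>m | f m \<noteq> 0. f m * (inverse (sqrt (sqnorm m)) * jacobi_P' a b m x))" for x
  interpret jacobi_truncation a b F F'
    using assms(1,2) unfolding F_def[abs_def] F'_def[abs_def]
    by unfold_locales (auto intro!: continuous_intros DERIV_sum DERIV_cmult jacobi_p_has_derivative
        continuous_on_jacobi_p continuous_on_jacobi_P')
  obtain A C where A: "0 \<le> A" and C: "0 < C"
    and bounded: "\<And>r. 1/2 \<le> r \<Longrightarrow> r < 1 \<Longrightarrow> square_sums_bounded A (C * sqrt (1 - r)) (outer_coeff r)"
    by (rule outer_coeff_square_sums_bounded) (rule that)
  have diff_eq: "(\<lambda>n. jacobi_T a b r f n - f n) = (\<lambda>n. - outer_coeff r n)" if "0 \<le> r" "r \<le> 1" for r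
  proof -
    have "outer r = (\<lambda>x. if \<bar>x\<bar> \<le> r then 0 else (\<Sum>m | f m \<noteq> 0. f m * jacobi_p a b m x))"
      by (simp add: fun_eq_iff outer_def F_def)
    then show ?thesis
      using jacobi_T_minus_eq[OF assms(4) that] by (simp add: outer_coeff_def)
  qed
  have near_1: "\<forall>\<^sub>F r in at_left 1. 1/2 < r \<and> r < (1::real)"
    using eventually_at_left_real[of "1/2" "1::real"] by simp
  have sq: "\<forall>\<^sub>F r in at_left 1. square_sums_bounded A (C * sqrt (1 - r)) (\<lambda>n. jacobi_T a b r f n - f n)"
    using near_1 by eventually_elim (simp add: diff_eq bounded)
  have pos: "\<forall>\<^sub>F r in at_left 1. 0 < C * sqrt (1 - r)"
    using near_1 by eventually_elim (use C in simp)
  have lim: "((\<lambda>r. C * sqrt (1 - r)) \<longlongrightarrow> 0) (at_left 1)"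
    by (auto intro!: tendsto_eq_intros)
  show ?thesis
    using lp_norm_tendsto_zero_of_square_tails[OF assms(3) A lim pos sq] by blast
qed

end
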